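(* Suppose Assumption 1' and the first-stage condition $E(D_{11})-E(D_{10})>E(D_{01})-E(D_{00})$, $E(D_{11})>E(D_{10})$ hold, that $D_{01}$ and $D_{00}$ have the same distribution, and that $D_{11}$ first-order stochastically dominates $D_{10}$ (i.e. $P(D_{11}\ge d)\ge P(D_{10}\ge d)$ for all $d$). Assume all expectations below are finite and well defined. Let $\mathrm{ACR}=\sum_{d=1}^{\bar d}w_d\,E\big(Y(d)-Y(d-1)\mid D(0)<d\leq D(1),\,G=1,\,T=1\big)$. Then 1. If Assumptions 3 and 4 (ordered versions) hold, $W_{DID}=\mathrm{ACR}$. 2. If Assumption 3' (ordered version) holds, $W_{TC}=\mathrm{ACR}$. 3. If Assumptions 6 and 7 (ordered versions) hold, $W_{CIC}=\mathrm{ACR}$.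
   Context: Ordered-treatment framework. Let $(Y(0),\dots,Y(\bar d),V,G,T)$ be random variables with $G\in\{0,1\}$, $T\in\{0,1\}$, $V$ real. Assumption 1': $D=\sum_{d=1}^{\bar d}1\{V\geq v^d_{GT}\}$ with real constants $-\infty=v^0_{gt}<v^1_{gt}<\dots<v^{\bar d+1}_{gt}=+\infty$, and $V$ independent of $T$ given $G$; potential treatments $D(t)=\sum_{d=1}^{\bar d}1\{V\geq v^d_{Gt}\}$; observed outcome $Y=Y(D)$. For a random variable $R$, $R_{gt}$ is distributed as $R$ given $G=g,T=t$, $R_{dgt}$ as $R$ given $D=d,G=g,T=t$; $F_R$ cdfs, $F^{-1}(q)=\inf\{x:F(x)\ge q\}$. Assumption 3: $E(Y(0)\mid G,T=1)-E(Y(0)\mid G,T=0)$ does not depend on $G$. Assumption 4: for all $d\in\{0,\dots,\bar d\}$, $E(Y(d)-Y(0)\mid G,T=1,D(0)=d)=E(Y(d)-Y(0)\mid G,T=0,D(0)=d)$. Assumption 3': for all $d$, $E(Y(d)\mid G,T=1,D(0)=d)-E(Y(d)\mid G,T=0,D(0)=d)$ does not depend on $G$. Assumption 6: for each $d$, $Y(d)=h_d(U_d,T)$, $U_d$ real, $h_d(\cdot,t)$ strictly increasing for each $t$, and $U_d$ independent of $T$ given $(G,D(0))$. Assumption 7: $\mathrm{Supp}(Y_{dgt})=\mathrm{Supp}(Y)$ for all $(d,g,t)$ in the support of $(D,G,T)$, $\mathrm{Supp}(Y)$ a closed interval, each $F_{Y_{dgt}}$ continuous on $\mathbb{R}$ and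 strictly increasing on $\mathrm{Supp}(Y)$. Definitions: $DID_R=E(R_{11})-E(R_{10})-(E(R_{01})-E(R_{00}))$, $W_{DID}=DID_Y/DID_D$; $\delta_d=E(Y_{d01})-E(Y_{d00})$, $W_{TC}=\dfrac{E(Y_{11})-E(Y+\delta_D\mid G=1,T=0)}{E(D_{11})-E(D_{10})}$; $Q_d=F^{-1}_{Y_{d01}}\circ F_{Y_{d00}}$, $W_{CIC}=\dfrac{E(Y_{11})-E(Q_D(Y)\mid G=1,T=0)}{E(D_{11})-E(D_{10})}$; $w_d=\dfrac{P(D_{11}\geq d)-P(D_{10}\geq d)}{E(D_{11})-E(D_{10})}$. *)

theory Defs
  imports "HOL-Probability.Probability"
begin

definition ev :: "'a measure \<Rightarrow> ('a \<Rightarrow> bool) \<Rightarrow> 'a set" where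
  "ev M P = {\<omega> \<in> space M. P \<omega>}"

definition pr :: "'a measure \<Rightarrow> ('a \<Rightarrow> bool) \<Rightarrow> real" where
  "pr M P = measure M (ev M P)"

text \<open>Conditional probability P(A | B) (elementary; 0 if P(B) = 0 by Isabelle's x/0 = 0).\<close>
definition cprob :: "'a measure \<Rightarrow> ('a \<Rightarrow> bool) \<Rightarrow> ('a \<Rightarrow> bool) \<Rightarrow> real" where
  "cprob M A B = pr M (\<lambda>\<omega>. A \<omega> \<and> B \<omega>) / pr M B"

definition cexp :: "'a measure \<Rightarrow> ('a \<Rightarrow> real) \<Rightarrow> ('a \<Rightarrow> bool) \<Rightarrow> real" where
  "cexp M X B = (\<integral>\<omega>. indicator (ev M B) \<omega> * X \<omega> \<partial>M) / pr M B"

definition ccdf :: "'a measure \<Rightarrow> ('a \<Rightarrow> real) \<Rightarrow> ('a \<Rightarrow> bool) \<Rightarrow> real \<Rightarrow> real" where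
  "ccdf M R B y = cprob M (\<lambda>\<omega>. R \<omega> \<le> y) B"

definition quantile :: "(real \<Rightarrow> real) \<Rightarrow> real \<Rightarrow> real" where
  "quantile F q = Inf {x. q \<le> F x}"

definition csupp :: "'a measure \<Rightarrow> ('a \<Rightarrow> real) \<Rightarrow> ('a \<Rightarrow> bool) \<Rightarrow> real set" where
  "csupp M R B = {y. \<forall>e>0. pr M (\<lambda>\<omega>. B \<omega> \<and> dist (R \<omega>) y < e) > 0}"

definition cindep :: "'a measure \<Rightarrow> ('a \<Rightarrow> real) \<Rightarrow> ('a \<Rightarrow> nat) \<Rightarrow> ('a \<Rightarrow> bool) \<Rightarrow> bool" where
  "cindep M X T C = (\<forall>A \<in> sets borel. \<forall>t.
      pr M (\<lambda>\<omega>. X \<omega> \<in> A \<and> T \<omega> = t \<and> C \<omega>) * pr M C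
        = pr M (\<lambda>\<omega>. X \<omega> \<in> A \<and> C \<omega>) * pr M (\<lambda>\<omega>. T \<omega> = t \<and> C \<omega>))"

end

theory Submission
  imports Defs
begin

text \<open>Because the thresholds are monotone and \<open>V\<close> is independent of \<open>T\<close> within groups, the
  distributional assumptions on the treatment become almost sure statements about potential
  treatments: \<open>D(1) = D(0)\<close> in the control group and \<open>D(0) \<le> D(1)\<close> in the treatment group.
  In the treatment group at \<open>T = 1\<close> the observed outcome therefore exceeds \<open>Y(D(0))\<close> by the
  increments \<open>Y(d) - Y(d - 1)\<close> over the doses \<open>D(0) < d \<le> D(1)\<close>; taking expectations yields
  the numerator of the ACR.  Each Wald ratio has the first stage as denominator, and its numerator
  differs from that of the ACR only in how the counterfactual mean of \<open>Y(D(0))\<close> in cell (1,1) is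
  rebuilt from the other three cells: by common trends of \<open>Y(0)\<close> and of \<open>Y(d) - Y(0)\<close> given
  \<open>D(0)\<close> (DID), by common trends of \<open>Y(d)\<close> given \<open>D(0) = d\<close> (TC), or by the quantile-quantile
  transform between the control cells (CIC).\<close>

section \<open>Probabilities and conditional expectations of events\<close>

context prob_space
begin

lemma sets_ev [measurable]: "Measurable.pred M P \<Longrightarrow> ev M P \<in> sets M"
  unfolding ev_def by measurable

lemma pr_nonneg: "0 \<le> pr M P"
  by (simp add: pr_def)

lemma pr_cong: "(\<And>\<omega>. \<omega> \<in> space M \<Longrightarrow> P \<omega> = Q \<omega>) \<Longrightarrow> pr M P = pr M Q"
  unfolding pr_def ev_def by (metis (mono_tags, lifting) Collect_cong)

lemma pr_cong_AE:
  "Measurable.pred M P \<Longrightarrow> Measurable.pred M Q \<Longrightarrow> (AE \<omega> in M. P \<omega> = Q \<omega>) \<Longrightarrow> pr M P = pr M Q"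
  unfolding pr_def by (rule measure_eq_AE) (auto simp: ev_def elim!: AE_mp)

lemma pr_mono:
  "Measurable.pred M Q \<Longrightarrow> (\<And>\<omega>. \<omega> \<in> space M \<Longrightarrow> P \<omega> \<Longrightarrow> Q \<omega>) \<Longrightarrow> pr M P \<le> pr M Q"
  unfolding pr_def by (rule finite_measure_mono) (auto simp: ev_def)

lemma AE_not_if_pr_eq_0: "Measurable.pred M P \<Longrightarrow> pr M P = 0 \<Longrightarrow> AE \<omega> in M. \<not> P \<omega>"
  unfolding pr_def
  by (rule AE_I'[of "ev M P"]) (auto simp: ev_def emeasure_eq_measure null_sets_def)

lemma pr_eq_0_if_AE_not:
  assumes [measurable]: "Measurable.pred M P" and "AE \<omega> in M. \<not> P \<omega>"
  shows "pr M P = 0"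
proof -
  have "pr M P = pr M (\<lambda>_. False)"
    using assms(2) by (intro pr_cong_AE) auto
  then show ?thesis by (simp add: pr_def ev_def)
qed

lemma pr_disj:
  assumes [measurable]: "Measurable.pred M P" "Measurable.pred M Q"
    and disjoint: "\<And>\<omega>. \<omega> \<in> space M \<Longrightarrow> P \<omega> \<Longrightarrow> Q \<omega> \<Longrightarrow> False"
  shows "pr M (\<lambda>\<omega>. P \<omega> \<or> Q \<omega>) = pr M P + pr M Q"
proof -
  have "ev M (\<lambda>\<omega>. P \<omega> \<or> Q \<omega>) = ev M P \<union> ev M Q" by (auto simp: ev_def)
  moreover have "ev M P \<inter> ev M Q = {}" using disjoint by (auto simp: ev_def)
  ultimately show ?thesis unfolding pr_def by (simp add: finite_measure_Union)
qed

lemma pr_eq_integral_indicator: "Measurable.pred M P \<Longrightarrow> pr M P = (\<integral>\<omega>. indicator (ev M P) \<omega> \<partial>M)"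
  by (simp add: pr_def ev_def)

lemma integrable_indicator_ev: "Measurable.pred M P \<Longrightarrow> integrable M (indicator (ev M P) :: 'a \<Rightarrow> real)"
  by (rule integrable_real_indicator) (auto simp: less_top[symmetric])

lemma integrable_indicator_ev_mult:
  fixes X :: "'a \<Rightarrow> real"
  assumes "Measurable.pred M P" "integrable M X"
  shows "integrable M (\<lambda>\<omega>. indicator (ev M P) \<omega> * X \<omega>)"
  using integrable_mult_indicator[of "ev M P" M X] assms by (simp add: ev_def Measurable.pred_def)

lemma pr_eq_sum_partition:
  assumes "finite I" and [measurable]: "Measurable.pred M P" "\<And>i. i \<in> I \<Longrightarrow> Measurable.pred M (Q i)"
    and cover: "\<And>\<omega>. \<omega> \<in> space M \<Longrightarrow> P \<omega> \<longleftrightarrow> (\<exists>i\<in>I. Q i \<omega>)"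
    and disjoint: "\<And>\<omega> i j. \<omega> \<in> space M \<Longrightarrow> i \<in> I \<Longrightarrow> j \<in> I \<Longrightarrow> Q i \<omega> \<Longrightarrow> Q j \<omega> \<Longrightarrow> i = j"
  shows "pr M P = (\<Sum>i\<in>I. pr M (Q i))"
proof -
  have "indicator (ev M P) \<omega> = (\<Sum>i\<in>I. indicator (ev M (Q i)) \<omega> :: real)"
    if \<omega>: "\<omega> \<in> space M" for \<omega>
  proof (cases "P \<omega>")
    case True
    then obtain i where i: "i \<in> I" "Q i \<omega>" using cover \<omega> by auto
    have "Q j \<omega> \<longleftrightarrow> j = i" if "j \<in> I" for j
      using disjoint[OF \<omega> that i(1) _ i(2)] i(2) by blast
    then have "(\<Sum>j\<in>I. indicator (ev M (Q j)) \<omega> :: real) = (\<Sum>j\<in>I. if j = i then 1 else 0)"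
      using \<omega> by (intro sum.cong refl) (auto simp: ev_def)
    then show ?thesis using i True \<open>finite I\<close> \<omega> by (simp add: ev_def)
  next
    case False
    then show ?thesis using cover \<omega> by (auto simp: ev_def)
  qed
  then have "(\<integral>\<omega>. indicator (ev M P) \<omega> \<partial>M) = (\<integral>\<omega>. (\<Sum>i\<in>I. indicator (ev M (Q i)) \<omega>) \<partial>M :: real)"
    by (intro Bochner_Integration.integral_cong) auto
  also have "\<dots> = (\<Sum>i\<in>I. (\<integral>\<omega>. indicator (ev M (Q i)) \<omega> \<partial>M))"
    by (intro Bochner_Integration.integral_sum integrable_indicator_ev) simp
  finally show ?thesis by (simp add: pr_eq_integral_indicator)
qed

lemma AE_imp_if_pr_le:
  assumes [measurable]: "Measurable.pred M A" "Measurable.pred M B"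
    and sub: "\<And>\<omega>. \<omega> \<in> space M \<Longrightarrow> A \<omega> \<Longrightarrow> B \<omega>" and le: "pr M B \<le> pr M A"
  shows "AE \<omega> in M. B \<omega> \<longrightarrow> A \<omega>"
proof -
  have "pr M B = pr M (\<lambda>\<omega>. A \<omega> \<or> (B \<omega> \<and> \<not> A \<omega>))" using sub by (intro pr_cong) auto
  also have "\<dots> = pr M A + pr M (\<lambda>\<omega>. B \<omega> \<and> \<not> A \<omega>)" by (intro pr_disj) auto
  finally have "pr M (\<lambda>\<omega>. B \<omega> \<and> \<not> A \<omega>) = 0"
    using le pr_nonneg[of "\<lambda>\<omega>. B \<omega> \<and> \<not> A \<omega>"] by simp
  then have "AE \<omega> in M. \<not> (B \<omega> \<and> \<not> A \<omega>)" by (intro AE_not_if_pr_eq_0) auto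
  then show ?thesis by auto
qed

lemma AE_threshold_imp_if_pr_le:
  fixes X :: "'a \<Rightarrow> real"
  assumes [measurable]: "X \<in> borel_measurable M" "Measurable.pred M C"
    and le: "pr M (\<lambda>\<omega>. a \<le> X \<omega> \<and> C \<omega>) \<le> pr M (\<lambda>\<omega>. b \<le> X \<omega> \<and> C \<omega>)"
  shows "AE \<omega> in M. C \<omega> \<longrightarrow> a \<le> X \<omega> \<longrightarrow> b \<le> X \<omega>"
proof (cases "b \<le> a")
  case False
  have "AE \<omega> in M. (a \<le> X \<omega> \<and> C \<omega>) \<longrightarrow> (b \<le> X \<omega> \<and> C \<omega>)"
    using False le by (intro AE_imp_if_pr_le) auto
  then show ?thesis by (auto elim!: AE_mp)
qed auto

lemma integral_indicator_mult_eq_cexp: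
  assumes [measurable]: "Measurable.pred M B"
  shows "(\<integral>\<omega>. indicator (ev M B) \<omega> * X \<omega> \<partial>M) = cexp M X B * pr M B"
proof (cases "pr M B = 0")
  case True
  then have "AE \<omega> in M. \<not> B \<omega>" by (intro AE_not_if_pr_eq_0) auto
  then have "AE \<omega> in M. indicator (ev M B) \<omega> * X \<omega> = 0"
    by (auto simp: ev_def elim!: AE_mp)
  then show ?thesis using True by (simp add: integral_eq_zero_AE)
qed (simp add: cexp_def)

lemma cexp_cong_AE:
  assumes [measurable]: "Measurable.pred M B" "Measurable.pred M B'"
    "X \<in> borel_measurable M" "X' \<in> borel_measurable M"
    and "AE \<omega> in M. B \<omega> = B' \<omega>" and "AE \<omega> in M. B \<omega> \<longrightarrow> X \<omega> = X' \<omega>"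
  shows "cexp M X B = cexp M X' B'"
proof -
  have "(\<integral>\<omega>. indicator (ev M B) \<omega> * X \<omega> \<partial>M) = (\<integral>\<omega>. indicator (ev M B') \<omega> * X' \<omega> \<partial>M)"
    using assms(5,6) by (intro integral_cong_AE; measurable?; eventually_elim) (auto simp: ev_def indicator_def)
  moreover have "pr M B = pr M B'"
    using assms(5) by (intro pr_cong_AE) auto
  ultimately show ?thesis by (simp add: cexp_def)
qed

lemma cexp_add:
  assumes [measurable]: "Measurable.pred M B" and "integrable M X" "integrable M X'"
  shows "cexp M (\<lambda>\<omega>. X \<omega> + X' \<omega>) B = cexp M X B + cexp M X' B"
proof -
  have "(\<integral>\<omega>. indicator (ev M B) \<omega> * (X \<omega> + X' \<omega>) \<partial>M)
      = (\<integral>\<omega>. indicator (ev M B) \<omega> * X \<omega> \<partial>M) + (\<integral>\<omega>. indicator (ev M B) \<omega> * X' \<omega> \<partial>M)"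
    unfolding distrib_left using assms
    by (intro Bochner_Integration.integral_add integrable_indicator_ev_mult) auto
  then show ?thesis by (simp add: cexp_def add_divide_distrib)
qed

lemma cexp_const:
  assumes "Measurable.pred M B" "pr M B \<noteq> 0"
  shows "cexp M (\<lambda>_. c) B = c"
  using assms by (simp add: cexp_def pr_eq_integral_indicator)

lemma cexp_diff:
  assumes [measurable]: "Measurable.pred M B" and "integrable M X" "integrable M X'"
  shows "cexp M (\<lambda>\<omega>. X \<omega> - X' \<omega>) B = cexp M X B - cexp M X' B"
proof -
  have "(\<integral>\<omega>. indicator (ev M B) \<omega> * (X \<omega> - X' \<omega>) \<partial>M)
      = (\<integral>\<omega>. indicator (ev M B) \<omega> * X \<omega> \<partial>M) - (\<integral>\<omega>. indicator (ev M B) \<omega> * X' \<omega> \<partial>M)"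
    unfolding right_diff_distrib using assms
    by (intro Bochner_Integration.integral_diff integrable_indicator_ev_mult) auto
  then show ?thesis by (simp add: cexp_def diff_divide_distrib)
qed

lemma cexp_select_eq_sum:
  fixes Z :: "nat \<Rightarrow> 'a \<Rightarrow> real"
  assumes [measurable]: "Measurable.pred M B" "K \<in> measurable M (count_space UNIV)"
    and K_le: "\<And>\<omega>. \<omega> \<in> space M \<Longrightarrow> K \<omega> \<le> n"
    and int: "integrable M (\<lambda>\<omega>. indicator (ev M B) \<omega> * Z (K \<omega>) \<omega>)"
  shows "cexp M (\<lambda>\<omega>. Z (K \<omega>) \<omega>) B
       = (\<Sum>k\<le>n. cexp M (Z k) (\<lambda>\<omega>. B \<omega> \<and> K \<omega> = k) * cprob M (\<lambda>\<omega>. K \<omega> = k) B)"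
proof -
  have piece: "indicator (ev M (\<lambda>\<omega>. B \<omega> \<and> K \<omega> = k)) \<omega> * Z k \<omega>
      = indicator (ev M (\<lambda>\<omega>. K \<omega> = k)) \<omega> * (indicator (ev M B) \<omega> * Z (K \<omega>) \<omega>)" for k \<omega>
    by (auto simp: ev_def indicator_def)
  have "indicator (ev M B) \<omega> * Z (K \<omega>) \<omega> = (\<Sum>k\<le>n. indicator (ev M (\<lambda>\<omega>. B \<omega> \<and> K \<omega> = k)) \<omega> * Z k \<omega>)"
    if "\<omega> \<in> space M" for \<omega>
  proof -
    have "(\<Sum>k\<le>n. indicator (ev M (\<lambda>\<omega>. B \<omega> \<and> K \<omega> = k)) \<omega> * Z k \<omega>)
        = (\<Sum>k\<le>n. if k = K \<omega> then indicator (ev M B) \<omega> * Z k \<omega> else 0)"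
      using that by (intro sum.cong refl) (auto simp: ev_def indicator_def)
    then show ?thesis using K_le[OF that] by simp
  qed
  then have "(\<integral>\<omega>. indicator (ev M B) \<omega> * Z (K \<omega>) \<omega> \<partial>M)
      = (\<integral>\<omega>. (\<Sum>k\<le>n. indicator (ev M (\<lambda>\<omega>. B \<omega> \<and> K \<omega> = k)) \<omega> * Z k \<omega>) \<partial>M)"
    by (rule Bochner_Integration.integral_cong[OF refl])
  also have "\<dots> = (\<Sum>k\<le>n. (\<integral>\<omega>. indicator (ev M (\<lambda>\<omega>. B \<omega> \<and> K \<omega> = k)) \<omega> * Z k \<omega> \<partial>M))"
    unfolding piece by (intro Bochner_Integration.integral_sum integrable_indicator_ev_mult[OF _ int]) auto
  also have "\<dots> = (\<Sum>k\<le>n. cexp M (Z k) (\<lambda>\<omega>. B \<omega> \<and> K \<omega> = k) * pr M (\<lambda>\<omega>. K \<omega> = k \<and> B \<omega>))"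
    by (intro sum.cong refl) (simp add: integral_indicator_mult_eq_cexp conj_commute)
  finally show ?thesis by (simp add: cexp_def cprob_def sum_divide_distrib)
qed

end

lemma integrable_select:
  fixes f :: "nat \<Rightarrow> 'a \<Rightarrow> real"
  assumes "K \<in> measurable M (count_space UNIV)" and "\<And>\<omega>. \<omega> \<in> space M \<Longrightarrow> K \<omega> \<le> n"
    and "\<And>k. k \<le> n \<Longrightarrow> integrable M (f k)"
  shows "integrable M (\<lambda>\<omega>. f (K \<omega>) \<omega>)"
proof -
  have "integrable M (\<lambda>\<omega>. \<Sum>k\<le>n. indicator {\<omega>\<in>space M. K \<omega> = k} \<omega> *\<^sub>R f k \<omega>)"
    using assms by (intro Bochner_Integration.integrable_sum integrable_mult_indicator) auto
  moreover have "(\<Sum>k\<le>n. indicator {\<omega>\<in>space M. K \<omega> = k} \<omega> *\<^sub>R f k \<omega>) = f (K \<omega>) \<omega>"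
    if "\<omega> \<in> space M" for \<omega>
    using assms(2)[OF that] that by (simp add: indicator_def sum.delta)
  ultimately show ?thesis by (simp cong: Bochner_Integration.integrable_cong)
qed

lemma telescope_between:
  fixes f :: "nat \<Rightarrow> real"
  assumes "a \<le> b" "b \<le> n"
  shows "f b - f a = (\<Sum>d\<in>{1..n}. if a < d \<and> d \<le> b then f d - f (d - 1) else 0)"
proof -
  have "{d \<in> {1..n}. a < d \<and> d \<le> b} = {Suc a..<Suc b}"
    using assms by auto
  then have "(\<Sum>d\<in>{1..n}. if a < d \<and> d \<le> b then f d - f (d - 1) else 0) = (\<Sum>i=a..<b. f (Suc i) - f i)"
    by (simp only: sum.inter_filter[symmetric] finite_atLeastAtMost sum.atLeast_Suc_lessThan_Suc_shift)
       (simp add: comp_def)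
  also have "\<dots> = f b - f a" using assms(1) by (rule sum_Suc_diff')
  finally show ?thesis by simp
qed

section \<open>Conditional independence\<close>

definition law_on :: "'a measure \<Rightarrow> ('a \<Rightarrow> real) \<Rightarrow> ('a \<Rightarrow> bool) \<Rightarrow> real measure" where
  "law_on M X S = distr (density M (\<lambda>\<omega>. ennreal (indicator (ev M S) \<omega>))) borel X"

context prob_space
begin

lemma sets_law_on [simp]: "sets (law_on M X S) = sets borel"
  by (simp add: law_on_def)

lemma emeasure_law_on:
  assumes [measurable]: "X \<in> borel_measurable M" "Measurable.pred M S" "A \<in> sets borel"
  shows "emeasure (law_on M X S) A = ennreal (pr M (\<lambda>\<omega>. X \<omega> \<in> A \<and> S \<omega>))"
proof -
  have "emeasure (law_on M X S) A = emeasure (density M (\<lambda>\<omega>. ennreal (indicator (ev M S) \<omega>))) (X -` A \<inter> space M)"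
    unfolding law_on_def by (subst emeasure_distr) auto
  also have "\<dots> = (\<integral>\<^sup>+ \<omega>. ennreal (indicator (ev M S) \<omega>) * indicator (X -` A \<inter> space M) \<omega> \<partial>M)"
    by (subst emeasure_density) auto
  also have "\<dots> = (\<integral>\<^sup>+ \<omega>. indicator (ev M (\<lambda>\<omega>. X \<omega> \<in> A \<and> S \<omega>)) \<omega> \<partial>M)"
    by (intro nn_integral_cong) (auto simp: ev_def indicator_def)
  also have "\<dots> = emeasure M (ev M (\<lambda>\<omega>. X \<omega> \<in> A \<and> S \<omega>))"
    by (intro nn_integral_indicator) measurable
  also have "\<dots> = ennreal (pr M (\<lambda>\<omega>. X \<omega> \<in> A \<and> S \<omega>))"
    by (simp add: pr_def emeasure_eq_measure)
  finally show ?thesis .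
qed

lemma integral_law_on:
  fixes f :: "real \<Rightarrow> real"
  assumes [measurable]: "X \<in> borel_measurable M" "Measurable.pred M S" "f \<in> borel_measurable borel"
  shows "integral\<^sup>L (law_on M X S) f = (\<integral>\<omega>. indicator (ev M S) \<omega> * f (X \<omega>) \<partial>M)"
  unfolding law_on_def by (simp add: integral_distr integral_density)

lemma cindep_pr:
  assumes "cindep M X T C" "{x. P x} \<in> sets borel"
  shows "pr M (\<lambda>\<omega>. P (X \<omega>) \<and> T \<omega> = t \<and> C \<omega>) * pr M C
       = pr M (\<lambda>\<omega>. P (X \<omega>) \<and> C \<omega>) * pr M (\<lambda>\<omega>. T \<omega> = t \<and> C \<omega>)"
  using assms unfolding cindep_def by (auto dest!: bspec[of _ _ "{x. P x}"])

lemma cindep_pr_cross: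
  assumes "cindep M X T C" "A \<in> sets borel" and [measurable]: "Measurable.pred M C"
  shows "pr M (\<lambda>\<omega>. X \<omega> \<in> A \<and> T \<omega> = t \<and> C \<omega>) * pr M (\<lambda>\<omega>. T \<omega> = s \<and> C \<omega>)
       = pr M (\<lambda>\<omega>. X \<omega> \<in> A \<and> T \<omega> = s \<and> C \<omega>) * pr M (\<lambda>\<omega>. T \<omega> = t \<and> C \<omega>)"
proof (cases "pr M C = 0")
  case True
  have "pr M (\<lambda>\<omega>. X \<omega> \<in> A \<and> T \<omega> = r \<and> C \<omega>) = 0" for r
    using pr_mono[of C "\<lambda>\<omega>. X \<omega> \<in> A \<and> T \<omega> = r \<and> C \<omega>"] True
      pr_nonneg[of "\<lambda>\<omega>. X \<omega> \<in> A \<and> T \<omega> = r \<and> C \<omega>"] by auto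
  then show ?thesis by simp
next
  case False
  have e: "pr M (\<lambda>\<omega>. X \<omega> \<in> A \<and> T \<omega> = r \<and> C \<omega>) * pr M C
      = pr M (\<lambda>\<omega>. X \<omega> \<in> A \<and> C \<omega>) * pr M (\<lambda>\<omega>. T \<omega> = r \<and> C \<omega>)" for r
    using cindep_pr[OF assms(1), of "\<lambda>x. x \<in> A" r] assms(2) by simp
  have "pr M (\<lambda>\<omega>. X \<omega> \<in> A \<and> T \<omega> = t \<and> C \<omega>) * pr M (\<lambda>\<omega>. T \<omega> = s \<and> C \<omega>) * pr M C
      = pr M (\<lambda>\<omega>. X \<omega> \<in> A \<and> T \<omega> = s \<and> C \<omega>) * pr M (\<lambda>\<omega>. T \<omega> = t \<and> C \<omega>) * pr M C"
    using e[of t] e[of s] by algebra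
  then show ?thesis using False by simp
qed

lemma emeasure_density_law_on:
  assumes [measurable]: "X \<in> borel_measurable M" "Measurable.pred M S" "A \<in> sets borel" and "0 \<le> c"
  shows "emeasure (density (law_on M X S) (\<lambda>_. ennreal c)) A = ennreal (pr M (\<lambda>\<omega>. X \<omega> \<in> A \<and> S \<omega>) * c)"
  using assms(4) pr_nonneg by (simp add: emeasure_density_const emeasure_law_on ennreal_mult' mult.commute)

lemma integral_density_law_on:
  fixes f :: "real \<Rightarrow> real"
  assumes [measurable]: "X \<in> borel_measurable M" "Measurable.pred M S" "f \<in> borel_measurable borel"
    and "0 \<le> c"
  shows "integral\<^sup>L (density (law_on M X S) (\<lambda>_. ennreal c)) f = c * (\<integral>\<omega>. indicator (ev M S) \<omega> * f (X \<omega>) \<partial>M)"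
proof -
  have "integral\<^sup>L (density (law_on M X S) (\<lambda>_. ennreal c)) f = c * integral\<^sup>L (law_on M X S) f"
    using assms(4) by (subst integral_density) (auto simp: law_on_def)
  then show ?thesis by (simp add: integral_law_on)
qed

lemma density_law_on_cindep:
  assumes ci: "cindep M X T C" and [measurable]: "X \<in> borel_measurable M" "Measurable.pred M C"
    "T \<in> measurable M (count_space UNIV)"
  shows "density (law_on M X (\<lambda>\<omega>. T \<omega> = t \<and> C \<omega>)) (\<lambda>_. ennreal (pr M (\<lambda>\<omega>. T \<omega> = s \<and> C \<omega>)))
       = density (law_on M X (\<lambda>\<omega>. T \<omega> = s \<and> C \<omega>)) (\<lambda>_. ennreal (pr M (\<lambda>\<omega>. T \<omega> = t \<and> C \<omega>)))"
proof (rule measure_eqI)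
  fix A assume "A \<in> sets (density (law_on M X (\<lambda>\<omega>. T \<omega> = t \<and> C \<omega>)) (\<lambda>_. ennreal (pr M (\<lambda>\<omega>. T \<omega> = s \<and> C \<omega>))))"
  then have A: "A \<in> sets borel" by simp
  show "emeasure (density (law_on M X (\<lambda>\<omega>. T \<omega> = t \<and> C \<omega>)) (\<lambda>_. ennreal (pr M (\<lambda>\<omega>. T \<omega> = s \<and> C \<omega>)))) A
      = emeasure (density (law_on M X (\<lambda>\<omega>. T \<omega> = s \<and> C \<omega>)) (\<lambda>_. ennreal (pr M (\<lambda>\<omega>. T \<omega> = t \<and> C \<omega>)))) A"
    using cindep_pr_cross[OF ci A, of t s] by (simp add: emeasure_density_law_on[OF _ _ A] pr_nonneg)
qed simp

lemma cindep_integral_cross: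
  fixes f :: "real \<Rightarrow> real"
  assumes ci: "cindep M X T C" and [measurable]: "X \<in> borel_measurable M" "Measurable.pred M C"
    "T \<in> measurable M (count_space UNIV)" "f \<in> borel_measurable borel"
  shows "(\<integral>\<omega>. indicator (ev M (\<lambda>\<omega>. T \<omega> = t \<and> C \<omega>)) \<omega> * f (X \<omega>) \<partial>M) * pr M (\<lambda>\<omega>. T \<omega> = s \<and> C \<omega>)
       = (\<integral>\<omega>. indicator (ev M (\<lambda>\<omega>. T \<omega> = s \<and> C \<omega>)) \<omega> * f (X \<omega>) \<partial>M) * pr M (\<lambda>\<omega>. T \<omega> = t \<and> C \<omega>)"
  using arg_cong[OF density_law_on_cindep[OF assms(1-4), of t s], of "\<lambda>N. integral\<^sup>L N f"]
  by (simp add: integral_density_law_on pr_nonneg mult.commute)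

lemma cindep_cprob_eq:
  assumes "cindep M X T C" "{x. P x} \<in> sets borel" and [measurable]: "Measurable.pred M C"
    and pos: "pr M (\<lambda>\<omega>. T \<omega> = t \<and> C \<omega>) > 0"
  shows "pr M (\<lambda>\<omega>. P (X \<omega>) \<and> T \<omega> = t \<and> C \<omega>) / pr M (\<lambda>\<omega>. T \<omega> = t \<and> C \<omega>)
       = pr M (\<lambda>\<omega>. P (X \<omega>) \<and> C \<omega>) / pr M C"
proof -
  have "pr M (\<lambda>\<omega>. T \<omega> = t \<and> C \<omega>) \<le> pr M C" by (intro pr_mono) auto
  then show ?thesis using cindep_pr[OF assms(1,2), of t] pos by (simp add: field_simps)
qed

end

section \<open>Distribution functions and quantiles\<close>

lemma quantile_eq_if_strict_mono_on:
  fixes F :: "real \<Rightarrow> real"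
  assumes "is_interval S" "x \<in> S" and mono: "strict_mono_on S F"
    and below: "\<And>y. y \<notin> S \<Longrightarrow> y < x \<Longrightarrow> F y = 0" and "F x > 0"
  shows "quantile F (F x) = x"
  unfolding quantile_def
proof (rule cInf_eq_minimum)
  fix y assume "y \<in> {y. F x \<le> F y}"
  then have "F x \<le> F y" by simp
  show "x \<le> y"
  proof (rule ccontr)
    assume "\<not> x \<le> y"
    then have "F y < F x"
      using mono assms(1,2,5) below[of y] by (cases "y \<in> S") (auto simp: strict_mono_on_def)
    then show False using \<open>F x \<le> F y\<close> by simp
  qed
qed simp

context prob_space
begin

text \<open>The complement of the support is covered by countably many null intervals with
  rational endpoints.\<close>
lemma AE_in_csupp:
  assumes [measurable]: "R \<in> borel_measurable M" "Measurable.pred M B"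
  shows "AE \<omega> in M. B \<omega> \<longrightarrow> R \<omega> \<in> csupp M R B"
proof -
  define N where "N = {pq \<in> \<rat> \<times> \<rat>. pr M (\<lambda>\<omega>. B \<omega> \<and> fst pq < R \<omega> \<and> R \<omega> < snd pq) = 0}"
  have "countable N"
    unfolding N_def by (rule countable_subset[of _ "\<rat> \<times> \<rat>"]) (auto intro: countable_rat)
  moreover have "\<forall>pq\<in>N. AE \<omega> in M. \<not> (B \<omega> \<and> fst pq < R \<omega> \<and> R \<omega> < snd pq)"
  proof
    fix pq assume "pq \<in> N"
    then show "AE \<omega> in M. \<not> (B \<omega> \<and> fst pq < R \<omega> \<and> R \<omega> < snd pq)"
      by (intro AE_not_if_pr_eq_0) (auto simp: N_def)
  qed
  ultimately have "AE \<omega> in M. \<forall>pq\<in>N. \<not> (B \<omega> \<and> fst pq < R \<omega> \<and> R \<omega> < snd pq)"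
    by (simp add: AE_ball_countable)
  then show ?thesis
  proof eventually_elim
    case (elim \<omega>)
    show ?case
    proof (intro impI, unfold csupp_def, clarify, rule ccontr)
      fix e :: real assume "B \<omega>" "e > 0" and "\<not> 0 < pr M (\<lambda>\<omega>'. B \<omega>' \<and> dist (R \<omega>') (R \<omega>) < e)"
      then have null: "pr M (\<lambda>\<omega>'. B \<omega>' \<and> dist (R \<omega>') (R \<omega>) < e) = 0"
        using pr_nonneg[of "\<lambda>\<omega>'. B \<omega>' \<and> dist (R \<omega>') (R \<omega>) < e"] by simp
      obtain p where p: "p \<in> \<rat>" "R \<omega> - e < p" "p < R \<omega>"
        using Rats_dense_in_real[of "R \<omega> - e" "R \<omega>"] \<open>e > 0\<close> by auto
      obtain q where q: "q \<in> \<rat>" "R \<omega> < q" "q < R \<omega> + e"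
        using Rats_dense_in_real[of "R \<omega>" "R \<omega> + e"] \<open>e > 0\<close> by auto
      have "pr M (\<lambda>\<omega>'. B \<omega>' \<and> p < R \<omega>' \<and> R \<omega>' < q) \<le> pr M (\<lambda>\<omega>'. B \<omega>' \<and> dist (R \<omega>') (R \<omega>) < e)"
        using p q by (intro pr_mono) (auto simp: dist_real_def)
      then have "(p, q) \<in> N"
        using null p q pr_nonneg[of "\<lambda>\<omega>'. B \<omega>' \<and> p < R \<omega>' \<and> R \<omega>' < q"] by (auto simp: N_def)
      then show False using elim \<open>B \<omega>\<close> p q by auto
    qed
  qed
qed

lemma pr_eq_0_if_isCont_ccdf:
  assumes [measurable]: "R \<in> borel_measurable M" "Measurable.pred M B"
    and pos: "pr M B > 0" and cont: "isCont (ccdf M R B) s"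
  shows "pr M (\<lambda>\<omega>. B \<omega> \<and> R \<omega> = s) = 0"
proof (rule ccontr)
  define F where "F = ccdf M R B"
  define a where "a = pr M (\<lambda>\<omega>. B \<omega> \<and> R \<omega> = s)"
  assume "pr M (\<lambda>\<omega>. B \<omega> \<and> R \<omega> = s) \<noteq> 0"
  then have "a / pr M B > 0"
    using pos pr_nonneg[of "\<lambda>\<omega>. B \<omega> \<and> R \<omega> = s"] by (simp add: a_def)
  then obtain \<epsilon> where "\<epsilon> > 0" and \<epsilon>: "\<And>x. x \<noteq> s \<and> norm (x - s) < \<epsilon> \<Longrightarrow> norm (F x - F s) < a / pr M B"
    using cont unfolding isCont_def LIM_eq F_def by blast
  have "pr M (\<lambda>\<omega>. (B \<omega> \<and> R \<omega> = s) \<or> (R \<omega> \<le> s - \<epsilon>/2 \<and> B \<omega>)) = a + pr M (\<lambda>\<omega>. R \<omega> \<le> s - \<epsilon>/2 \<and> B \<omega>)"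
    unfolding a_def using \<open>\<epsilon> > 0\<close> by (intro pr_disj) auto
  moreover have "pr M (\<lambda>\<omega>. (B \<omega> \<and> R \<omega> = s) \<or> (R \<omega> \<le> s - \<epsilon>/2 \<and> B \<omega>)) \<le> pr M (\<lambda>\<omega>. R \<omega> \<le> s \<and> B \<omega>)"
    using \<open>\<epsilon> > 0\<close> by (intro pr_mono) auto
  ultimately have "a \<le> (F s - F (s - \<epsilon>/2)) * pr M B"
    using pos unfolding F_def ccdf_def cprob_def by (simp add: algebra_simps)
  moreover have "F s - F (s - \<epsilon>/2) < a / pr M B"
    using \<epsilon>[of "s - \<epsilon>/2"] \<open>\<epsilon> > 0\<close> by auto
  then have "(F s - F (s - \<epsilon>/2)) * pr M B < a"
    using pos by (simp add: pos_less_divide_eq)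
  ultimately show False by simp
qed

lemma ccdf_nonneg: "0 \<le> ccdf M R B y"
  by (simp add: ccdf_def cprob_def pr_nonneg)

lemma ccdf_le_1:
  assumes "Measurable.pred M B"
  shows "ccdf M R B y \<le> 1"
proof -
  have "pr M (\<lambda>\<omega>. R \<omega> \<le> y \<and> B \<omega>) \<le> pr M B" using assms by (intro pr_mono) auto
  then show ?thesis
    using pr_nonneg[of B] by (cases "pr M B = 0") (auto simp: ccdf_def cprob_def divide_le_eq_1)
qed

lemma ccdf_eq_0_below_csupp:
  assumes [measurable]: "R \<in> borel_measurable M" "Measurable.pred M B"
    and S: "is_interval (csupp M R B)" and y: "y \<notin> csupp M R B" "s \<in> csupp M R B" "y < s"
  shows "ccdf M R B y = 0"
proof -
  have "AE \<omega> in M. \<not> (R \<omega> \<le> y \<and> B \<omega>)"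
    using AE_in_csupp[OF assms(1,2)]
  proof eventually_elim
    case (elim \<omega>)
    show ?case
    proof
      assume "R \<omega> \<le> y \<and> B \<omega>"
      then have "y \<in> csupp M R B" using elim S y unfolding is_interval_1 by (meson less_imp_le)
      then show False using y by simp
    qed
  qed
  then have "pr M (\<lambda>\<omega>. R \<omega> \<le> y \<and> B \<omega>) = 0" by (intro pr_eq_0_if_AE_not) auto
  then show ?thesis by (simp add: ccdf_def cprob_def)
qed

lemma ccdf_eq_1_above_csupp:
  assumes [measurable]: "R \<in> borel_measurable M" "Measurable.pred M B" and pos: "pr M B > 0"
    and S: "is_interval (csupp M R B)" and y: "y \<notin> csupp M R B" "s \<in> csupp M R B" "s < y"
  shows "ccdf M R B y = 1"
proof -
  have "AE \<omega> in M. (R \<omega> \<le> y \<and> B \<omega>) = B \<omega>"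
    using AE_in_csupp[OF assms(1,2)]
  proof eventually_elim
    case (elim \<omega>)
    have "R \<omega> \<le> y" if "B \<omega>"
    proof (rule ccontr)
      assume "\<not> R \<omega> \<le> y"
      then have "y \<in> csupp M R B"
        using S y elim that unfolding is_interval_1 by (meson less_imp_le not_le)
      then show False using y by simp
    qed
    then show ?case by auto
  qed
  then have "pr M (\<lambda>\<omega>. R \<omega> \<le> y \<and> B \<omega>) = pr M B" by (intro pr_cong_AE) auto
  then show ?thesis using pos by (simp add: ccdf_def cprob_def)
qed

lemma AE_ne_level_if_strict_mono_on:
  fixes F :: "real \<Rightarrow> real"
  assumes [measurable]: "R \<in> borel_measurable M" "Measurable.pred M B"
    and "pr M B > 0" "continuous_on UNIV (ccdf M R B)" and mono: "strict_mono_on S F"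
  shows "AE \<omega> in M. B \<omega> \<longrightarrow> R \<omega> \<in> S \<longrightarrow> F (R \<omega>) \<noteq> c"
proof (cases "\<exists>s\<in>S. F s = c")
  case True
  then obtain s where s: "s \<in> S" "F s = c" by auto
  have "pr M (\<lambda>\<omega>. B \<omega> \<and> R \<omega> = s) = 0"
    using assms(3,4) by (intro pr_eq_0_if_isCont_ccdf) (auto simp: continuous_on_eq_continuous_at)
  then have "AE \<omega> in M. \<not> (B \<omega> \<and> R \<omega> = s)" by (intro AE_not_if_pr_eq_0) auto
  then show ?thesis
    by eventually_elim (use s strict_mono_on_eqD[OF mono] in blast)
qed auto

lemma quantile_ccdf_inverse:
  assumes [measurable]: "R \<in> borel_measurable M" "Measurable.pred M B" and "pr M B > 0"
    and S: "is_interval (csupp M R B)" and mono: "strict_mono_on (csupp M R B) (ccdf M R B)"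
    and "s \<in> csupp M R B" and x: "0 < ccdf M R B x" "ccdf M R B x < 1"
  shows "quantile (ccdf M R B) (ccdf M R B x) = x"
proof -
  have "x \<in> csupp M R B"
  proof (rule ccontr)
    assume "x \<notin> csupp M R B"
    then have "x \<noteq> s" using \<open>s \<in> csupp M R B\<close> by auto
    then consider "x < s" | "s < x" by linarith
    then show False
      using ccdf_eq_0_below_csupp[OF assms(1,2) S \<open>x \<notin> csupp M R B\<close> \<open>s \<in> csupp M R B\<close>]
        ccdf_eq_1_above_csupp[OF assms(1-3) S \<open>x \<notin> csupp M R B\<close> \<open>s \<in> csupp M R B\<close>] x
      by cases auto
  qed
  then show ?thesis
    using S mono x(1) ccdf_eq_0_below_csupp[OF assms(1,2) S _ \<open>x \<in> csupp M R B\<close>]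
    by (intro quantile_eq_if_strict_mono_on) auto
qed

end

section \<open>The ordered-treatment model\<close>

locale ordered_treatment = prob_space M for M :: "'a measure" +
  fixes Y :: "nat \<Rightarrow> 'a \<Rightarrow> real" and V :: "'a \<Rightarrow> real" and G T :: "'a \<Rightarrow> nat"
    and v :: "nat \<Rightarrow> nat \<Rightarrow> nat \<Rightarrow> real" and dbar :: nat
  assumes G_measurable [measurable]: "G \<in> measurable M (count_space UNIV)"
    and T_measurable [measurable]: "T \<in> measurable M (count_space UNIV)"
    and V_measurable [measurable]: "V \<in> borel_measurable M"
    and integrable_Y: "\<forall>d\<le>dbar. integrable M (Y d)"
    and pr_cell_pos: "\<forall>g\<le>1. \<forall>t\<le>1. pr M (\<lambda>\<omega>. G \<omega> = g \<and> T \<omega> = t) > 0"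
    and threshold_strict_mono: "\<forall>g t d. 1 \<le> d \<and> d < dbar \<longrightarrow> v d g t < v (Suc d) g t"
    and cindep_V_T: "\<forall>g. cindep M V T (\<lambda>\<omega>. G \<omega> = g)"
begin

definition treatment :: "nat \<Rightarrow> nat \<Rightarrow> real \<Rightarrow> nat" where
  "treatment g t x = (\<Sum>d\<in>{1..dbar}. if v d g t \<le> x then 1 else 0)"

definition Dp :: "nat \<Rightarrow> 'a \<Rightarrow> nat" where
  "Dp t \<omega> = treatment (G \<omega>) t (V \<omega>)"

definition D :: "'a \<Rightarrow> nat" where
  "D \<omega> = Dp (T \<omega>) \<omega>"

definition Yo :: "'a \<Rightarrow> real" where
  "Yo \<omega> = Y (D \<omega>) \<omega>"

definition Y_D0 :: "'a \<Rightarrow> real" where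
  "Y_D0 \<omega> = Y (Dp 0 \<omega>) \<omega>"

definition Ecell :: "('a \<Rightarrow> real) \<Rightarrow> nat \<Rightarrow> nat \<Rightarrow> real" where
  "Ecell X g t = cexp M X (\<lambda>\<omega>. G \<omega> = g \<and> T \<omega> = t)"

lemma measurable_treatment [measurable]: "treatment g t \<in> measurable borel (count_space UNIV)"
  unfolding treatment_def by measurable

lemma measurable_Dp [measurable]: "Dp t \<in> measurable M (count_space UNIV)"
  unfolding Dp_def by measurable

lemma measurable_D [measurable]: "D \<in> measurable M (count_space UNIV)"
  unfolding D_def Dp_def treatment_def by measurable

lemma Dp_le_dbar: "Dp t \<omega> \<le> dbar"
proof -
  have "Dp t \<omega> \<le> (\<Sum>d\<in>{1..dbar}. 1)"
    unfolding Dp_def treatment_def by (intro sum_mono) auto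
  then show ?thesis by simp
qed

lemma D_le_dbar: "D \<omega> \<le> dbar"
  by (simp add: D_def Dp_le_dbar)

lemma borel_measurable_Y: "d \<le> dbar \<Longrightarrow> Y d \<in> borel_measurable M"
  using integrable_Y by auto

lemma integrable_Yo: "integrable M Yo"
  unfolding Yo_def by (rule integrable_select[of _ _ dbar]) (auto simp: D_le_dbar integrable_Y)

lemma integrable_Y_D0: "integrable M Y_D0"
  unfolding Y_D0_def by (rule integrable_select[of _ _ dbar]) (auto simp: Dp_le_dbar integrable_Y)

lemma borel_measurable_Yo [measurable]: "Yo \<in> borel_measurable M"
  using integrable_Yo by auto

lemma borel_measurable_Y_D0 [measurable]: "Y_D0 \<in> borel_measurable M"
  using integrable_Y_D0 by auto

lemma pr_group_pos: "g \<le> 1 \<Longrightarrow> pr M (\<lambda>\<omega>. G \<omega> = g) > 0"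
  using pr_cell_pos pr_mono[of "\<lambda>\<omega>. G \<omega> = g" "\<lambda>\<omega>. G \<omega> = g \<and> T \<omega> = 0"] by fastforce

lemma threshold_mono: "1 \<le> d' \<Longrightarrow> d' \<le> d \<Longrightarrow> d \<le> dbar \<Longrightarrow> v d' g t \<le> v d g t"
proof (induction d)
  case (Suc d)
  show ?case
  proof (cases "d' = Suc d")
    case False
    then have "v d' g t \<le> v d g t" "v d g t < v (Suc d) g t"
      using Suc threshold_strict_mono by auto
    then show ?thesis by simp
  qed simp
qed simp

text \<open>Since the thresholds increase, \<open>Dp t \<omega>\<close> counts an initial segment of them.\<close>
lemma le_Dp_iff:
  assumes "1 \<le> d" "d \<le> dbar"
  shows "d \<le> Dp t \<omega> \<longleftrightarrow> v d (G \<omega>) t \<le> V \<omega>"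
proof
  assume "v d (G \<omega>) t \<le> V \<omega>"
  moreover have "v d' (G \<omega>) t \<le> v d (G \<omega>) t" if "d' \<in> {1..d}" for d'
    using that assms by (intro threshold_mono) auto
  ultimately have "v d' (G \<omega>) t \<le> V \<omega>" if "d' \<in> {1..d}" for d'
    using that by (meson order_trans)
  then have "d = (\<Sum>d'\<in>{1..d}. if v d' (G \<omega>) t \<le> V \<omega> then 1 else 0 :: nat)"
    by simp
  also have "\<dots> \<le> Dp t \<omega>"
    unfolding Dp_def treatment_def using assms by (intro sum_mono2) auto
  finally show "d \<le> Dp t \<omega>" .
next
  assume "d \<le> Dp t \<omega>"
  show "v d (G \<omega>) t \<le> V \<omega>"
  proof (rule ccontr)
    assume "\<not> v d (G \<omega>) t \<le> V \<omega>"
    then have "Dp t \<omega> \<le> (\<Sum>d'\<in>{1..dbar}. if d' < d then 1 else 0 :: nat)"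
      unfolding Dp_def treatment_def using threshold_mono[of d _ "G \<omega>" t] assms
      by (intro sum_mono) (auto simp: not_less intro: order_trans)
    also have "\<dots> = card ({1..dbar} \<inter> {d'. d' < d})"
      by (simp add: sum.If_cases)
    also have "{1..dbar} \<inter> {d'. d' < d} = {1..<d}"
      using assms by auto
    finally show False using \<open>d \<le> Dp t \<omega>\<close> assms by simp
  qed
qed

text \<open>This is where the independence of \<open>V\<close> and \<open>T\<close> within groups enters.\<close>
lemma cprob_Dp_cell_eq_group:
  assumes "g \<le> 1" "t \<le> 1"
  shows "cprob M (\<lambda>\<omega>. P (Dp s \<omega>)) (\<lambda>\<omega>. G \<omega> = g \<and> T \<omega> = t) = cprob M (\<lambda>\<omega>. P (Dp s \<omega>)) (\<lambda>\<omega>. G \<omega> = g)"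
proof -
  have "{x. P (treatment g s x)} \<in> sets borel" by measurable
  then have "pr M (\<lambda>\<omega>. P (treatment g s (V \<omega>)) \<and> T \<omega> = t \<and> G \<omega> = g) * pr M (\<lambda>\<omega>. G \<omega> = g)
      = pr M (\<lambda>\<omega>. P (treatment g s (V \<omega>)) \<and> G \<omega> = g) * pr M (\<lambda>\<omega>. T \<omega> = t \<and> G \<omega> = g)"
    using cindep_V_T by (intro cindep_pr) auto
  moreover have "pr M (\<lambda>\<omega>. P (treatment g s (V \<omega>)) \<and> T \<omega> = t \<and> G \<omega> = g)
      = pr M (\<lambda>\<omega>. P (Dp s \<omega>) \<and> G \<omega> = g \<and> T \<omega> = t)"
    "pr M (\<lambda>\<omega>. P (treatment g s (V \<omega>)) \<and> G \<omega> = g) = pr M (\<lambda>\<omega>. P (Dp s \<omega>) \<and> G \<omega> = g)"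
    "pr M (\<lambda>\<omega>. T \<omega> = t \<and> G \<omega> = g) = pr M (\<lambda>\<omega>. G \<omega> = g \<and> T \<omega> = t)"
    by (auto intro!: pr_cong simp: Dp_def)
  moreover have "pr M (\<lambda>\<omega>. G \<omega> = g \<and> T \<omega> = t) > 0"
    using pr_cell_pos assms by auto
  ultimately show ?thesis
    using pr_group_pos[OF assms(1)] by (simp add: cprob_def field_simps)
qed

lemma cprob_Dp_T_indep:
  "g \<le> 1 \<Longrightarrow> cprob M (\<lambda>\<omega>. P (Dp s \<omega>)) (\<lambda>\<omega>. G \<omega> = g \<and> T \<omega> = 1)
    = cprob M (\<lambda>\<omega>. P (Dp s \<omega>)) (\<lambda>\<omega>. G \<omega> = g \<and> T \<omega> = 0)"
  by (simp add: cprob_Dp_cell_eq_group)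

lemma cprob_le_D_cell: "cprob M (\<lambda>\<omega>. d \<le> D \<omega>) (\<lambda>\<omega>. G \<omega> = g \<and> T \<omega> = t)
    = cprob M (\<lambda>\<omega>. d \<le> Dp t \<omega>) (\<lambda>\<omega>. G \<omega> = g \<and> T \<omega> = t)"
  unfolding cprob_def by (intro arg_cong2[where f="(/)"] pr_cong refl) (auto simp: D_def)

lemma cprob_le_D_eq:
  assumes "g \<le> 1" "t \<le> 1"
  shows "cprob M (\<lambda>\<omega>. d \<le> D \<omega>) (\<lambda>\<omega>. G \<omega> = g \<and> T \<omega> = t) = cprob M (\<lambda>\<omega>. d \<le> Dp t \<omega>) (\<lambda>\<omega>. G \<omega> = g)"
  using cprob_Dp_cell_eq_group[OF assms, of "\<lambda>n. d \<le> n" t] by (simp add: cprob_le_D_cell)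

lemma cprob_le_D_eq_sum:
  assumes [measurable]: "Measurable.pred M B"
  shows "cprob M (\<lambda>\<omega>. d \<le> D \<omega>) B = (\<Sum>k\<in>{d..dbar}. cprob M (\<lambda>\<omega>. D \<omega> = k) B)"
proof -
  have "pr M (\<lambda>\<omega>. d \<le> D \<omega> \<and> B \<omega>) = (\<Sum>k\<in>{d..dbar}. pr M (\<lambda>\<omega>. D \<omega> = k \<and> B \<omega>))"
    by (rule pr_eq_sum_partition) (auto simp: D_le_dbar)
  then show ?thesis by (simp add: cprob_def sum_divide_distrib)
qed

lemma AE_Dp_le_Dp_if_cprob_le:
  assumes "g \<le> 1" "s \<le> 1" "t \<le> 1"
    and le: "\<forall>d\<in>{1..dbar}. cprob M (\<lambda>\<omega>. d \<le> D \<omega>) (\<lambda>\<omega>. G \<omega> = g \<and> T \<omega> = s)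
                          \<le> cprob M (\<lambda>\<omega>. d \<le> D \<omega>) (\<lambda>\<omega>. G \<omega> = g \<and> T \<omega> = t)"
  shows "AE \<omega> in M. G \<omega> = g \<longrightarrow> Dp s \<omega> \<le> Dp t \<omega>"
proof -
  have "AE \<omega> in M. G \<omega> = g \<longrightarrow> d \<le> Dp s \<omega> \<longrightarrow> d \<le> Dp t \<omega>" if d: "d \<in> {1..dbar}" for d
  proof -
    have "pr M (\<lambda>\<omega>. d \<le> Dp r \<omega> \<and> G \<omega> = g) = pr M (\<lambda>\<omega>. v d g r \<le> V \<omega> \<and> G \<omega> = g)" for r
      using d by (intro pr_cong) (auto simp: le_Dp_iff)
    moreover have "cprob M (\<lambda>\<omega>. d \<le> Dp s \<omega>) (\<lambda>\<omega>. G \<omega> = g) \<le> cprob M (\<lambda>\<omega>. d \<le> Dp t \<omega>) (\<lambda>\<omega>. G \<omega> = g)"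
      using le d assms(1-3) by (simp add: cprob_le_D_eq)
    then have "pr M (\<lambda>\<omega>. d \<le> Dp s \<omega> \<and> G \<omega> = g) \<le> pr M (\<lambda>\<omega>. d \<le> Dp t \<omega> \<and> G \<omega> = g)"
      using pr_group_pos[OF assms(1)] by (simp add: cprob_def divide_le_cancel)
    ultimately have "AE \<omega> in M. G \<omega> = g \<longrightarrow> v d g s \<le> V \<omega> \<longrightarrow> v d g t \<le> V \<omega>"
      by (intro AE_threshold_imp_if_pr_le) auto
    then show ?thesis by eventually_elim (use d in \<open>auto simp: le_Dp_iff\<close>)
  qed
  then have "AE \<omega> in M. \<forall>d\<in>{1..dbar}. G \<omega> = g \<longrightarrow> d \<le> Dp s \<omega> \<longrightarrow> d \<le> Dp t \<omega>"
    by (intro AE_finite_allI) auto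
  then show ?thesis
  proof eventually_elim
    case (elim \<omega>)
    show ?case
      using elim[rule_format, of "Dp s \<omega>"] Dp_le_dbar[of s \<omega>] by (cases "Dp s \<omega> = 0") auto
  qed
qed

lemma cprob_le_D_control_eq:
  assumes "\<forall>k. cprob M (\<lambda>\<omega>. D \<omega> = k) (\<lambda>\<omega>. G \<omega> = 0 \<and> T \<omega> = 1)
              = cprob M (\<lambda>\<omega>. D \<omega> = k) (\<lambda>\<omega>. G \<omega> = 0 \<and> T \<omega> = 0)"
  shows "cprob M (\<lambda>\<omega>. d \<le> D \<omega>) (\<lambda>\<omega>. G \<omega> = 0 \<and> T \<omega> = 1)
       = cprob M (\<lambda>\<omega>. d \<le> D \<omega>) (\<lambda>\<omega>. G \<omega> = 0 \<and> T \<omega> = 0)"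
  using assms by (simp add: cprob_le_D_eq_sum)

lemma AE_Dp_eq_control:
  assumes "\<forall>k. cprob M (\<lambda>\<omega>. D \<omega> = k) (\<lambda>\<omega>. G \<omega> = 0 \<and> T \<omega> = 1)
              = cprob M (\<lambda>\<omega>. D \<omega> = k) (\<lambda>\<omega>. G \<omega> = 0 \<and> T \<omega> = 0)"
  shows "AE \<omega> in M. G \<omega> = 0 \<longrightarrow> Dp 1 \<omega> = Dp 0 \<omega>"
proof -
  have "AE \<omega> in M. G \<omega> = 0 \<longrightarrow> Dp 0 \<omega> \<le> Dp 1 \<omega>" "AE \<omega> in M. G \<omega> = 0 \<longrightarrow> Dp 1 \<omega> \<le> Dp 0 \<omega>"
    using cprob_le_D_control_eq[OF assms, simplified]
    by (intro AE_Dp_le_Dp_if_cprob_le; simp)+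
  then show ?thesis by eventually_elim auto
qed

lemma AE_Dp_mono_treated:
  assumes "\<forall>d. cprob M (\<lambda>\<omega>. d \<le> D \<omega>) (\<lambda>\<omega>. G \<omega> = 1 \<and> T \<omega> = 1)
              \<ge> cprob M (\<lambda>\<omega>. d \<le> D \<omega>) (\<lambda>\<omega>. G \<omega> = 1 \<and> T \<omega> = 0)"
  shows "AE \<omega> in M. G \<omega> = 1 \<longrightarrow> Dp 0 \<omega> \<le> Dp 1 \<omega>"
  using assms by (intro AE_Dp_le_Dp_if_cprob_le) auto

lemma cexp_D_eq_sum_cprob_le_D:
  assumes [measurable]: "Measurable.pred M B"
  shows "cexp M (\<lambda>\<omega>. real (D \<omega>)) B = (\<Sum>d\<in>{1..dbar}. cprob M (\<lambda>\<omega>. d \<le> D \<omega>) B)"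
proof -
  have "real (D \<omega>) = (\<Sum>d\<in>{1..dbar}. if d \<le> D \<omega> then 1 else 0)" for \<omega>
  proof -
    have "{d\<in>{1..dbar}. d \<le> D \<omega>} = {1..D \<omega>}" using D_le_dbar[of \<omega>] by auto
    then show ?thesis by (simp flip: sum.inter_filter)
  qed
  then have "indicator (ev M B) \<omega> * real (D \<omega>)
      = (\<Sum>d\<in>{1..dbar}. indicator (ev M B) \<omega> * (if d \<le> D \<omega> then 1 else 0))" for \<omega>
    by (simp only: sum_distrib_left)
  also have "\<dots> \<omega> = (\<Sum>d\<in>{1..dbar}. indicator (ev M (\<lambda>\<omega>. d \<le> D \<omega> \<and> B \<omega>)) \<omega>)" for \<omega>
    by (intro sum.cong refl) (simp add: ev_def indicator_def)
  finally have "indicator (ev M B) \<omega> * real (D \<omega>) = (\<Sum>d\<in>{1..dbar}. indicator (ev M (\<lambda>\<omega>. d \<le> D \<omega> \<and> B \<omega>)) \<omega>)"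
    for \<omega> .
  then have "(\<integral>\<omega>. indicator (ev M B) \<omega> * real (D \<omega>) \<partial>M) = (\<Sum>d\<in>{1..dbar}. pr M (\<lambda>\<omega>. d \<le> D \<omega> \<and> B \<omega>))"
    by (simp add: Bochner_Integration.integral_sum integrable_indicator_ev pr_eq_integral_indicator)
  then show ?thesis by (simp add: cexp_def cprob_def sum_divide_distrib)
qed

definition complier_share :: "nat \<Rightarrow> real" where
  "complier_share d = cprob M (\<lambda>\<omega>. d \<le> D \<omega>) (\<lambda>\<omega>. G \<omega> = 1 \<and> T \<omega> = 1)
                    - cprob M (\<lambda>\<omega>. d \<le> D \<omega>) (\<lambda>\<omega>. G \<omega> = 1 \<and> T \<omega> = 0)"

definition first_stage :: real where
  "first_stage = Ecell (\<lambda>\<omega>. real (D \<omega>)) 1 1 - Ecell (\<lambda>\<omega>. real (D \<omega>)) 1 0"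

lemma Ecell_D_control_eq:
  assumes "\<forall>k. cprob M (\<lambda>\<omega>. D \<omega> = k) (\<lambda>\<omega>. G \<omega> = 0 \<and> T \<omega> = 1)
              = cprob M (\<lambda>\<omega>. D \<omega> = k) (\<lambda>\<omega>. G \<omega> = 0 \<and> T \<omega> = 0)"
  shows "Ecell (\<lambda>\<omega>. real (D \<omega>)) 0 1 = Ecell (\<lambda>\<omega>. real (D \<omega>)) 0 0"
proof -
  have cell: "Measurable.pred M (\<lambda>\<omega>. G \<omega> = 0 \<and> T \<omega> = t)" for t by measurable
  show ?thesis
    unfolding Ecell_def cexp_D_eq_sum_cprob_le_D[OF cell] cprob_le_D_control_eq[OF assms] ..
qed

definition complier :: "nat \<Rightarrow> 'a \<Rightarrow> bool" where
  "complier d = (\<lambda>\<omega>. Dp 0 \<omega> < d \<and> d \<le> Dp 1 \<omega> \<and> G \<omega> = 1 \<and> T \<omega> = 1)"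

lemma measurable_complier [measurable]: "Measurable.pred M (complier d)"
  unfolding complier_def by measurable

definition complier_effect :: "nat \<Rightarrow> real" where
  "complier_effect d = cexp M (\<lambda>\<omega>. Y d \<omega> - Y (d - 1) \<omega>) (complier d)"

text \<open>The weight \<open>w\<^sub>d\<close> of the ACR is \<open>complier_share d / first_stage\<close>.\<close>
definition ACR :: real where
  "ACR = (\<Sum>d\<in>{1..dbar}. complier_share d / first_stage * complier_effect d)"

lemma AE_telescope_compliers:
  assumes "AE \<omega> in M. G \<omega> = 1 \<longrightarrow> Dp 0 \<omega> \<le> Dp 1 \<omega>"
  shows "AE \<omega> in M. indicator (ev M (\<lambda>\<omega>. G \<omega> = 1 \<and> T \<omega> = 1)) \<omega> * (Yo \<omega> - Y_D0 \<omega>)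
    = (\<Sum>d\<in>{1..dbar}. indicator (ev M (complier d)) \<omega> * (Y d \<omega> - Y (d - 1) \<omega>))"
  using assms
proof eventually_elim
  case (elim \<omega>)
  show ?case
  proof (cases "\<omega> \<in> space M \<and> G \<omega> = 1 \<and> T \<omega> = 1")
    case True
    then have "Yo \<omega> - Y_D0 \<omega> = Y (Dp 1 \<omega>) \<omega> - Y (Dp 0 \<omega>) \<omega>"
      by (simp add: Yo_def Y_D0_def D_def)
    also have "\<dots> = (\<Sum>d\<in>{1..dbar}. if Dp 0 \<omega> < d \<and> d \<le> Dp 1 \<omega> then Y d \<omega> - Y (d - 1) \<omega> else 0)"
      using elim True Dp_le_dbar by (intro telescope_between) auto
    moreover have "(\<Sum>d\<in>{1..dbar}. indicator (ev M (complier d)) \<omega> * (Y d \<omega> - Y (d - 1) \<omega>))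
        = (\<Sum>d\<in>{1..dbar}. if Dp 0 \<omega> < d \<and> d \<le> Dp 1 \<omega> then Y d \<omega> - Y (d - 1) \<omega> else 0)"
      using True by (intro sum.cong refl) (simp add: ev_def complier_def)
    moreover have "indicator (ev M (\<lambda>\<omega>. G \<omega> = 1 \<and> T \<omega> = 1)) \<omega> = (1::real)"
      using True by (simp add: ev_def)
    ultimately show ?thesis by (simp only: mult_1_left)
  qed (auto simp: ev_def complier_def)
qed

lemma complier_share_eq_pr:
  assumes "AE \<omega> in M. G \<omega> = 1 \<longrightarrow> Dp 0 \<omega> \<le> Dp 1 \<omega>"
  shows "complier_share d = pr M (complier d) / pr M (\<lambda>\<omega>. G \<omega> = 1 \<and> T \<omega> = 1)"
proof -
  have "pr M (\<lambda>\<omega>. d \<le> Dp 1 \<omega> \<and> G \<omega> = 1 \<and> T \<omega> = 1)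
      = pr M (\<lambda>\<omega>. complier d \<omega> \<or> (d \<le> Dp 0 \<omega> \<and> G \<omega> = 1 \<and> T \<omega> = 1))"
    using assms by (intro pr_cong_AE) (auto simp: complier_def elim!: AE_mp)
  also have "\<dots> = pr M (complier d) + pr M (\<lambda>\<omega>. d \<le> Dp 0 \<omega> \<and> G \<omega> = 1 \<and> T \<omega> = 1)"
    by (intro pr_disj) (auto simp: complier_def)
  finally show ?thesis
    unfolding complier_share_def cprob_le_D_cell cprob_Dp_T_indep[of 1 "\<lambda>n. d \<le> n" 0, OF order_refl, symmetric]
    by (simp add: cprob_def add_divide_distrib)
qed

lemma Ecell_Yo_minus_Y_D0:
  assumes mono: "AE \<omega> in M. G \<omega> = 1 \<longrightarrow> Dp 0 \<omega> \<le> Dp 1 \<omega>"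
  shows "Ecell Yo 1 1 - Ecell Y_D0 1 1 = (\<Sum>d\<in>{1..dbar}. complier_share d * complier_effect d)"
proof -
  let ?C = "\<lambda>\<omega>. G \<omega> = 1 \<and> T \<omega> = 1"
  let ?jumps = "\<lambda>\<omega>. \<Sum>d\<in>{1..dbar}. indicator (ev M (complier d)) \<omega> * (Y d \<omega> - Y (d - 1) \<omega>)"
  have "?jumps \<in> borel_measurable M"
    using borel_measurable_Y by (intro borel_measurable_sum borel_measurable_times borel_measurable_diff) auto
  then have "(\<integral>\<omega>. indicator (ev M ?C) \<omega> * (Yo \<omega> - Y_D0 \<omega>) \<partial>M) = (\<integral>\<omega>. ?jumps \<omega> \<partial>M)"
    by (intro integral_cong_AE AE_telescope_compliers[OF mono]) auto
  also have "\<dots> = (\<Sum>d\<in>{1..dbar}. (\<integral>\<omega>. indicator (ev M (complier d)) \<omega> * (Y d \<omega> - Y (d - 1) \<omega>) \<partial>M))"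
    using integrable_Y
    by (intro Bochner_Integration.integral_sum integrable_indicator_ev_mult Bochner_Integration.integrable_diff) auto
  also have "\<dots> = (\<Sum>d\<in>{1..dbar}. complier_effect d * pr M (complier d))"
    by (simp only: complier_effect_def integral_indicator_mult_eq_cexp[OF measurable_complier])
  moreover have "Ecell Yo 1 1 - Ecell Y_D0 1 1 = cexp M (\<lambda>\<omega>. Yo \<omega> - Y_D0 \<omega>) ?C"
    unfolding Ecell_def using integrable_Yo integrable_Y_D0 by (intro cexp_diff[symmetric]) auto
  ultimately have "Ecell Yo 1 1 - Ecell Y_D0 1 1 = (\<Sum>d\<in>{1..dbar}. complier_effect d * pr M (complier d)) / pr M ?C"
    by (simp add: cexp_def)
  then show ?thesis
    by (simp add: sum_divide_distrib complier_share_eq_pr[OF mono] mult.commute)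
qed

lemma ACR_eq: "ACR = (\<Sum>d\<in>{1..dbar}. complier_share d * complier_effect d) / first_stage"
  by (simp add: ACR_def sum_divide_distrib)

subsection \<open>Wald-DID\<close>

lemma integrable_indicator_select_Dp0:
  fixes Z :: "nat \<Rightarrow> 'a \<Rightarrow> real"
  assumes "\<And>d. d \<le> dbar \<Longrightarrow> integrable M (Z d)"
  shows "integrable M (\<lambda>\<omega>. indicator (ev M (\<lambda>\<omega>. G \<omega> = g \<and> T \<omega> = t)) \<omega> * Z (Dp 0 \<omega>) \<omega>)"
proof -
  have "integrable M (\<lambda>\<omega>. Z (Dp 0 \<omega>) \<omega>)"
    by (rule integrable_select[of _ _ dbar]) (auto simp: Dp_le_dbar assms)
  then show ?thesis by (intro integrable_indicator_ev_mult) auto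
qed

lemma Ecell_select_Dp0:
  assumes "integrable M (\<lambda>\<omega>. indicator (ev M (\<lambda>\<omega>. G \<omega> = g \<and> T \<omega> = t)) \<omega> * Z (Dp 0 \<omega>) \<omega>)"
  shows "Ecell (\<lambda>\<omega>. Z (Dp 0 \<omega>) \<omega>) g t
       = (\<Sum>d\<le>dbar. cexp M (Z d) (\<lambda>\<omega>. G \<omega> = g \<and> T \<omega> = t \<and> Dp 0 \<omega> = d)
                      * cprob M (\<lambda>\<omega>. Dp 0 \<omega> = d) (\<lambda>\<omega>. G \<omega> = g \<and> T \<omega> = t))"
  unfolding Ecell_def using assms Dp_le_dbar
  by (subst cexp_select_eq_sum[where n=dbar]) (simp_all add: conj_assoc)

lemma Ecell_Yo_eq_Y_D0_T0: "Ecell Yo g 0 = Ecell Y_D0 g 0"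
  unfolding Ecell_def by (rule cexp_cong_AE) (auto simp: Yo_def Y_D0_def D_def)

lemma Ecell_Yo_eq_Y_D0_control:
  assumes "AE \<omega> in M. G \<omega> = 0 \<longrightarrow> Dp 1 \<omega> = Dp 0 \<omega>" "t \<le> 1"
  shows "Ecell Yo 0 t = Ecell Y_D0 0 t"
  unfolding Ecell_def
proof (rule cexp_cong_AE)
  show "AE \<omega> in M. G \<omega> = 0 \<and> T \<omega> = t \<longrightarrow> Yo \<omega> = Y_D0 \<omega>"
    using assms(1) by eventually_elim (use assms(2) in \<open>auto simp: Yo_def Y_D0_def D_def le_Suc_eq\<close>)
qed auto

text \<open>Assumption 4 makes the gain of \<open>Y(D(0))\<close> over \<open>Y(0)\<close> the same in both periods,
  because the distribution of \<open>D(0)\<close> within a group does not depend on the period.\<close>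
lemma Ecell_Y_D0_trend:
  assumes "g \<le> 1"
    and A4: "\<forall>d\<le>dbar. \<forall>g\<le>1.
            cexp M (\<lambda>\<omega>. Y d \<omega> - Y 0 \<omega>) (\<lambda>\<omega>. G \<omega> = g \<and> T \<omega> = 1 \<and> Dp 0 \<omega> = d)
          = cexp M (\<lambda>\<omega>. Y d \<omega> - Y 0 \<omega>) (\<lambda>\<omega>. G \<omega> = g \<and> T \<omega> = 0 \<and> Dp 0 \<omega> = d)"
  shows "Ecell Y_D0 g 1 - Ecell Y_D0 g 0 = Ecell (Y 0) g 1 - Ecell (Y 0) g 0"
proof -
  have gain: "Ecell Y_D0 g t - Ecell (Y 0) g t = Ecell (\<lambda>\<omega>. Y (Dp 0 \<omega>) \<omega> - Y 0 \<omega>) g t" for t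
    unfolding Ecell_def Y_D0_def using integrable_Y_D0[unfolded Y_D0_def] integrable_Y
    by (intro cexp_diff[symmetric]) auto
  have select: "Ecell (\<lambda>\<omega>. Y (Dp 0 \<omega>) \<omega> - Y 0 \<omega>) g t
      = (\<Sum>d\<le>dbar. cexp M (\<lambda>\<omega>. Y d \<omega> - Y 0 \<omega>) (\<lambda>\<omega>. G \<omega> = g \<and> T \<omega> = t \<and> Dp 0 \<omega> = d)
                     * cprob M (\<lambda>\<omega>. Dp 0 \<omega> = d) (\<lambda>\<omega>. G \<omega> = g \<and> T \<omega> = t))" for t
    using integrable_Y by (intro Ecell_select_Dp0 integrable_indicator_select_Dp0) auto
  have "Ecell (\<lambda>\<omega>. Y (Dp 0 \<omega>) \<omega> - Y 0 \<omega>) g 1 = Ecell (\<lambda>\<omega>. Y (Dp 0 \<omega>) \<omega> - Y 0 \<omega>) g 0"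
    unfolding select
  proof (intro sum.cong refl)
    fix d assume "d \<in> {..dbar}"
    then show "cexp M (\<lambda>\<omega>. Y d \<omega> - Y 0 \<omega>) (\<lambda>\<omega>. G \<omega> = g \<and> T \<omega> = 1 \<and> Dp 0 \<omega> = d)
          * cprob M (\<lambda>\<omega>. Dp 0 \<omega> = d) (\<lambda>\<omega>. G \<omega> = g \<and> T \<omega> = 1)
        = cexp M (\<lambda>\<omega>. Y d \<omega> - Y 0 \<omega>) (\<lambda>\<omega>. G \<omega> = g \<and> T \<omega> = 0 \<and> Dp 0 \<omega> = d)
          * cprob M (\<lambda>\<omega>. Dp 0 \<omega> = d) (\<lambda>\<omega>. G \<omega> = g \<and> T \<omega> = 0)"
      using A4 \<open>g \<le> 1\<close> cprob_Dp_T_indep[OF \<open>g \<le> 1\<close>, of "\<lambda>n. n = d" 0] by simp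
  qed
  then show ?thesis using gain[of 0] gain[of 1] by simp
qed

definition DID :: "('a \<Rightarrow> real) \<Rightarrow> real" where
  "DID X = Ecell X 1 1 - Ecell X 1 0 - (Ecell X 0 1 - Ecell X 0 0)"

theorem DID_Wald_eq_ACR:
  assumes D0_same: "\<forall>k. cprob M (\<lambda>\<omega>. D \<omega> = k) (\<lambda>\<omega>. G \<omega> = 0 \<and> T \<omega> = 1)
                     = cprob M (\<lambda>\<omega>. D \<omega> = k) (\<lambda>\<omega>. G \<omega> = 0 \<and> T \<omega> = 0)"
    and dominance: "\<forall>d. cprob M (\<lambda>\<omega>. d \<le> D \<omega>) (\<lambda>\<omega>. G \<omega> = 1 \<and> T \<omega> = 1)
                     \<ge> cprob M (\<lambda>\<omega>. d \<le> D \<omega>) (\<lambda>\<omega>. G \<omega> = 1 \<and> T \<omega> = 0)"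
    and A3: "Ecell (Y 0) 1 1 - Ecell (Y 0) 1 0 = Ecell (Y 0) 0 1 - Ecell (Y 0) 0 0"
    and A4: "\<forall>d\<le>dbar. \<forall>g\<le>1.
            cexp M (\<lambda>\<omega>. Y d \<omega> - Y 0 \<omega>) (\<lambda>\<omega>. G \<omega> = g \<and> T \<omega> = 1 \<and> Dp 0 \<omega> = d)
          = cexp M (\<lambda>\<omega>. Y d \<omega> - Y 0 \<omega>) (\<lambda>\<omega>. G \<omega> = g \<and> T \<omega> = 0 \<and> Dp 0 \<omega> = d)"
  shows "DID Yo / DID (\<lambda>\<omega>. real (D \<omega>)) = ACR"
proof -
  have "DID Yo = (Ecell Yo 1 1 - Ecell Y_D0 1 1) + (Ecell Y_D0 1 1 - Ecell Y_D0 1 0)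
               - (Ecell Y_D0 0 1 - Ecell Y_D0 0 0)"
    using Ecell_Yo_eq_Y_D0_T0 Ecell_Yo_eq_Y_D0_control[OF AE_Dp_eq_control[OF D0_same]]
    by (simp add: DID_def)
  also have "\<dots> = Ecell Yo 1 1 - Ecell Y_D0 1 1"
    using Ecell_Y_D0_trend[OF _ A4] A3 by simp
  finally show ?thesis
    using Ecell_Yo_minus_Y_D0[OF AE_Dp_mono_treated[OF dominance]] Ecell_D_control_eq[OF D0_same]
    by (simp add: ACR_eq DID_def first_stage_def)
qed

subsection \<open>Wald-TC\<close>

lemma Ecell_const_select_Dp0:
  "Ecell (\<lambda>\<omega>. c (Dp 0 \<omega>)) g t = (\<Sum>d\<le>dbar. c d * cprob M (\<lambda>\<omega>. Dp 0 \<omega> = d) (\<lambda>\<omega>. G \<omega> = g \<and> T \<omega> = t))"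
proof -
  have const: "cexp M (\<lambda>_. c d) (\<lambda>\<omega>. G \<omega> = g \<and> T \<omega> = t \<and> Dp 0 \<omega> = d) * cprob M (\<lambda>\<omega>. Dp 0 \<omega> = d) (\<lambda>\<omega>. G \<omega> = g \<and> T \<omega> = t)
      = c d * cprob M (\<lambda>\<omega>. Dp 0 \<omega> = d) (\<lambda>\<omega>. G \<omega> = g \<and> T \<omega> = t)" for d
  proof (cases "pr M (\<lambda>\<omega>. G \<omega> = g \<and> T \<omega> = t \<and> Dp 0 \<omega> = d) = 0")
    case True
    moreover have "pr M (\<lambda>\<omega>. Dp 0 \<omega> = d \<and> G \<omega> = g \<and> T \<omega> = t) = pr M (\<lambda>\<omega>. G \<omega> = g \<and> T \<omega> = t \<and> Dp 0 \<omega> = d)"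
      by (intro pr_cong) auto
    ultimately show ?thesis by (simp add: cprob_def)
  qed (simp add: cexp_const)
  have "Ecell (\<lambda>\<omega>. c (Dp 0 \<omega>)) g t = (\<Sum>d\<le>dbar. cexp M (\<lambda>_. c d) (\<lambda>\<omega>. G \<omega> = g \<and> T \<omega> = t \<and> Dp 0 \<omega> = d)
      * cprob M (\<lambda>\<omega>. Dp 0 \<omega> = d) (\<lambda>\<omega>. G \<omega> = g \<and> T \<omega> = t))"
    by (intro Ecell_select_Dp0 integrable_indicator_select_Dp0) simp
  then show ?thesis unfolding const .
qed

definition tc_shift :: "nat \<Rightarrow> real" where
  "tc_shift d = cexp M Yo (\<lambda>\<omega>. D \<omega> = d \<and> G \<omega> = 0 \<and> T \<omega> = 1)
              - cexp M Yo (\<lambda>\<omega>. D \<omega> = d \<and> G \<omega> = 0 \<and> T \<omega> = 0)"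

lemma cexp_Yo_control_cell:
  assumes "AE \<omega> in M. G \<omega> = 0 \<longrightarrow> Dp 1 \<omega> = Dp 0 \<omega>" "d \<le> dbar" "t \<le> 1"
  shows "cexp M Yo (\<lambda>\<omega>. D \<omega> = d \<and> G \<omega> = 0 \<and> T \<omega> = t)
       = cexp M (Y d) (\<lambda>\<omega>. G \<omega> = 0 \<and> T \<omega> = t \<and> Dp 0 \<omega> = d)"
proof (rule cexp_cong_AE)
  show "AE \<omega> in M. (D \<omega> = d \<and> G \<omega> = 0 \<and> T \<omega> = t) = (G \<omega> = 0 \<and> T \<omega> = t \<and> Dp 0 \<omega> = d)"
    using assms(1) by eventually_elim (use assms(3) in \<open>auto simp: D_def le_Suc_eq\<close>)
qed (auto simp: Yo_def borel_measurable_Y assms(2))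

lemma tc_shift_eq:
  assumes "AE \<omega> in M. G \<omega> = 0 \<longrightarrow> Dp 1 \<omega> = Dp 0 \<omega>" "d \<le> dbar"
  shows "tc_shift d = cexp M (Y d) (\<lambda>\<omega>. G \<omega> = 0 \<and> T \<omega> = 1 \<and> Dp 0 \<omega> = d)
                    - cexp M (Y d) (\<lambda>\<omega>. G \<omega> = 0 \<and> T \<omega> = 0 \<and> Dp 0 \<omega> = d)"
  using cexp_Yo_control_cell[OF assms, of 1] cexp_Yo_control_cell[OF assms, of 0]
  by (simp add: tc_shift_def)

text \<open>Under Assumption 3', the control group's period shift of \<open>Y(d)\<close> among units with
  \<open>D(0) = d\<close> is exactly the treated group's; adding it to \<open>Y\<close> in cell (1,0) recovers the
  counterfactual mean of \<open>Y(D(0))\<close> in cell (1,1).\<close>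
lemma TC_counterfactual:
  assumes a1: "AE \<omega> in M. G \<omega> = 0 \<longrightarrow> Dp 1 \<omega> = Dp 0 \<omega>"
    and A3': "\<forall>d\<le>dbar.
            cexp M (Y d) (\<lambda>\<omega>. G \<omega> = 1 \<and> T \<omega> = 1 \<and> Dp 0 \<omega> = d)
            - cexp M (Y d) (\<lambda>\<omega>. G \<omega> = 1 \<and> T \<omega> = 0 \<and> Dp 0 \<omega> = d)
          = cexp M (Y d) (\<lambda>\<omega>. G \<omega> = 0 \<and> T \<omega> = 1 \<and> Dp 0 \<omega> = d)
            - cexp M (Y d) (\<lambda>\<omega>. G \<omega> = 0 \<and> T \<omega> = 0 \<and> Dp 0 \<omega> = d)"
  shows "cexp M (\<lambda>\<omega>. Yo \<omega> + tc_shift (D \<omega>)) (\<lambda>\<omega>. G \<omega> = 1 \<and> T \<omega> = 0) = Ecell Y_D0 1 1"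
proof -
  let ?w = "\<lambda>t d. cprob M (\<lambda>\<omega>. Dp 0 \<omega> = d) (\<lambda>\<omega>. G \<omega> = 1 \<and> T \<omega> = t)"
  have "integrable M (\<lambda>\<omega>. tc_shift (D \<omega>))"
    by (rule integrable_select[of _ _ dbar, where f="\<lambda>d _. tc_shift d"]) (auto simp: D_le_dbar)
  then have "cexp M (\<lambda>\<omega>. Yo \<omega> + tc_shift (D \<omega>)) (\<lambda>\<omega>. G \<omega> = 1 \<and> T \<omega> = 0)
      = Ecell Yo 1 0 + Ecell (\<lambda>\<omega>. tc_shift (D \<omega>)) 1 0"
    unfolding Ecell_def using integrable_Yo by (intro cexp_add) auto
  also have "Ecell (\<lambda>\<omega>. tc_shift (D \<omega>)) 1 0 = Ecell (\<lambda>\<omega>. tc_shift (Dp 0 \<omega>)) 1 0"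
    unfolding Ecell_def using \<open>integrable M (\<lambda>\<omega>. tc_shift (D \<omega>))\<close>
    by (intro cexp_cong_AE) (auto simp: D_def)
  also have "\<dots> = (\<Sum>d\<le>dbar. tc_shift d * ?w 0 d)"
    by (rule Ecell_const_select_Dp0)
  also have "\<dots> = Ecell Y_D0 1 1 - Ecell Y_D0 1 0"
  proof -
    have select: "Ecell Y_D0 1 t = (\<Sum>d\<le>dbar. cexp M (Y d) (\<lambda>\<omega>. G \<omega> = 1 \<and> T \<omega> = t \<and> Dp 0 \<omega> = d) * ?w t d)" for t
      unfolding Y_D0_def using integrable_Y by (intro Ecell_select_Dp0 integrable_indicator_select_Dp0) auto
    have period_free: "?w 1 d = ?w 0 d" for d
      by (rule cprob_Dp_T_indep) simp
    have "Ecell Y_D0 1 1 - Ecell Y_D0 1 0 = (\<Sum>d\<le>dbar. (cexp M (Y d) (\<lambda>\<omega>. G \<omega> = 1 \<and> T \<omega> = 1 \<and> Dp 0 \<omega> = d)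
        - cexp M (Y d) (\<lambda>\<omega>. G \<omega> = 1 \<and> T \<omega> = 0 \<and> Dp 0 \<omega> = d)) * ?w 0 d)"
      unfolding select period_free left_diff_distrib sum_subtractf ..
    also have "\<dots> = (\<Sum>d\<le>dbar. tc_shift d * ?w 0 d)"
      using A3' tc_shift_eq[OF a1] by (intro sum.cong refl) simp
    finally show ?thesis ..
  qed
  finally show ?thesis
    using Ecell_Yo_eq_Y_D0_T0[of 1] by simp
qed

theorem TC_Wald_eq_ACR:
  assumes D0_same: "\<forall>k. cprob M (\<lambda>\<omega>. D \<omega> = k) (\<lambda>\<omega>. G \<omega> = 0 \<and> T \<omega> = 1)
                     = cprob M (\<lambda>\<omega>. D \<omega> = k) (\<lambda>\<omega>. G \<omega> = 0 \<and> T \<omega> = 0)"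
    and dominance: "\<forall>d. cprob M (\<lambda>\<omega>. d \<le> D \<omega>) (\<lambda>\<omega>. G \<omega> = 1 \<and> T \<omega> = 1)
                     \<ge> cprob M (\<lambda>\<omega>. d \<le> D \<omega>) (\<lambda>\<omega>. G \<omega> = 1 \<and> T \<omega> = 0)"
    and A3': "\<forall>d\<le>dbar.
            cexp M (Y d) (\<lambda>\<omega>. G \<omega> = 1 \<and> T \<omega> = 1 \<and> Dp 0 \<omega> = d)
            - cexp M (Y d) (\<lambda>\<omega>. G \<omega> = 1 \<and> T \<omega> = 0 \<and> Dp 0 \<omega> = d)
          = cexp M (Y d) (\<lambda>\<omega>. G \<omega> = 0 \<and> T \<omega> = 1 \<and> Dp 0 \<omega> = d)
            - cexp M (Y d) (\<lambda>\<omega>. G \<omega> = 0 \<and> T \<omega> = 0 \<and> Dp 0 \<omega> = d)"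
  shows "(Ecell Yo 1 1 - cexp M (\<lambda>\<omega>. Yo \<omega> + tc_shift (D \<omega>)) (\<lambda>\<omega>. G \<omega> = 1 \<and> T \<omega> = 0)) / first_stage = ACR"
  using TC_counterfactual[OF AE_Dp_eq_control[OF D0_same] A3']
    Ecell_Yo_minus_Y_D0[OF AE_Dp_mono_treated[OF dominance]]
  by (simp add: ACR_eq)

subsection \<open>Wald-CIC\<close>

definition cic_map :: "nat \<Rightarrow> real \<Rightarrow> real" where
  "cic_map d y = quantile (ccdf M Yo (\<lambda>\<omega>. D \<omega> = d \<and> G \<omega> = 0 \<and> T \<omega> = 1))
                   (ccdf M Yo (\<lambda>\<omega>. D \<omega> = d \<and> G \<omega> = 0 \<and> T \<omega> = 0) y)"

lemma AE_control_cell_eq: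
  assumes "AE \<omega> in M. G \<omega> = 0 \<longrightarrow> Dp 1 \<omega> = Dp 0 \<omega>" "t \<le> 1"
  shows "AE \<omega> in M. (D \<omega> = d \<and> G \<omega> = 0 \<and> T \<omega> = t) = (T \<omega> = t \<and> G \<omega> = 0 \<and> Dp 0 \<omega> = d)"
  using assms(1) by eventually_elim (use assms(2) in \<open>auto simp: D_def le_Suc_eq\<close>)

text \<open>In the control group \<open>D = D(0)\<close>, so by Assumption 6 the cdf of \<open>Y\<close> in cell
  \<open>(d, 0, t)\<close>, evaluated at \<open>h u t\<close>, is the conditional cdf of \<open>U\<close> at \<open>u\<close>, which does not
  depend on \<open>t\<close>.\<close>
lemma ccdf_control_cell_eq:
  fixes h :: "real \<Rightarrow> nat \<Rightarrow> real"
  assumes a1: "AE \<omega> in M. G \<omega> = 0 \<longrightarrow> Dp 1 \<omega> = Dp 0 \<omega>" and "t \<le> 1"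
    and pos: "pr M (\<lambda>\<omega>. D \<omega> = d \<and> G \<omega> = 0 \<and> T \<omega> = t) > 0"
    and [measurable]: "U \<in> borel_measurable M"
    and Yh: "\<forall>\<omega>\<in>space M. Y d \<omega> = h (U \<omega>) (T \<omega>)" and mono: "strict_mono (\<lambda>u. h u t)"
    and ci: "cindep M U T (\<lambda>\<omega>. G \<omega> = 0 \<and> Dp 0 \<omega> = d)"
  shows "ccdf M Yo (\<lambda>\<omega>. D \<omega> = d \<and> G \<omega> = 0 \<and> T \<omega> = t) (h u t)
       = cprob M (\<lambda>\<omega>. U \<omega> \<le> u) (\<lambda>\<omega>. G \<omega> = 0 \<and> Dp 0 \<omega> = d)"
proof -
  let ?C = "\<lambda>\<omega>. G \<omega> = 0 \<and> Dp 0 \<omega> = d"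
  have cell: "pr M (\<lambda>\<omega>. D \<omega> = d \<and> G \<omega> = 0 \<and> T \<omega> = t) = pr M (\<lambda>\<omega>. T \<omega> = t \<and> ?C \<omega>)"
    using AE_control_cell_eq[OF a1 \<open>t \<le> 1\<close>] by (intro pr_cong_AE) auto
  have "AE \<omega> in M. (Yo \<omega> \<le> h u t \<and> D \<omega> = d \<and> G \<omega> = 0 \<and> T \<omega> = t) = (U \<omega> \<le> u \<and> T \<omega> = t \<and> ?C \<omega>)"
    using AE_control_cell_eq[OF a1 \<open>t \<le> 1\<close>, of d] AE_space
  proof eventually_elim
    case (elim \<omega>)
    then show ?case
      using Yh strict_mono_less_eq[OF mono] by (auto simp: Yo_def)
  qed
  then have "pr M (\<lambda>\<omega>. Yo \<omega> \<le> h u t \<and> D \<omega> = d \<and> G \<omega> = 0 \<and> T \<omega> = t) = pr M (\<lambda>\<omega>. U \<omega> \<le> u \<and> T \<omega> = t \<and> ?C \<omega>)"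
    by (intro pr_cong_AE) auto
  then have "ccdf M Yo (\<lambda>\<omega>. D \<omega> = d \<and> G \<omega> = 0 \<and> T \<omega> = t) (h u t)
      = pr M (\<lambda>\<omega>. U \<omega> \<le> u \<and> T \<omega> = t \<and> ?C \<omega>) / pr M (\<lambda>\<omega>. T \<omega> = t \<and> ?C \<omega>)"
    unfolding ccdf_def cprob_def cell by simp
  also have "\<dots> = cprob M (\<lambda>\<omega>. U \<omega> \<le> u) ?C"
    unfolding cprob_def using pos cell by (intro cindep_cprob_eq[OF ci]) auto
  finally show ?thesis .
qed

text \<open>In the treated group at \<open>T = 0\<close>, \<open>cic_map d\<close> sends \<open>Y(d) = h(U, 0)\<close> to \<open>h(U, 1)\<close>:
  the two control cdfs agree along \<open>u \<mapsto> (h u 1, h u 0)\<close>, and since \<open>Y\<close> has no atoms in the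
  treated cell, its cdf level lies strictly between 0 and 1, where the quantile inverts the cdf.\<close>
lemma AE_cic_map_eq:
  fixes h :: "real \<Rightarrow> nat \<Rightarrow> real"
  assumes a1: "AE \<omega> in M. G \<omega> = 0 \<longrightarrow> Dp 1 \<omega> = Dp 0 \<omega>"
    and p00: "pr M (\<lambda>\<omega>. D \<omega> = d \<and> G \<omega> = 0 \<and> T \<omega> = 0) > 0"
    and p01: "pr M (\<lambda>\<omega>. D \<omega> = d \<and> G \<omega> = 0 \<and> T \<omega> = 1) > 0"
    and p10: "pr M (\<lambda>\<omega>. D \<omega> = d \<and> G \<omega> = 1 \<and> T \<omega> = 0) > 0"
    and [measurable]: "U \<in> borel_measurable M"
    and Yh: "\<forall>\<omega>\<in>space M. Y d \<omega> = h (U \<omega>) (T \<omega>)" and mono: "\<forall>t\<le>1. strict_mono (\<lambda>u. h u t)"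
    and ci: "cindep M U T (\<lambda>\<omega>. G \<omega> = 0 \<and> Dp 0 \<omega> = d)"
    and S: "is_interval S"
    and A7: "\<forall>g t. pr M (\<lambda>\<omega>. D \<omega> = d \<and> G \<omega> = g \<and> T \<omega> = t) > 0 \<longrightarrow>
            csupp M Yo (\<lambda>\<omega>. D \<omega> = d \<and> G \<omega> = g \<and> T \<omega> = t) = S
            \<and> continuous_on UNIV (ccdf M Yo (\<lambda>\<omega>. D \<omega> = d \<and> G \<omega> = g \<and> T \<omega> = t))
            \<and> strict_mono_on S (ccdf M Yo (\<lambda>\<omega>. D \<omega> = d \<and> G \<omega> = g \<and> T \<omega> = t))"
  shows "AE \<omega> in M. G \<omega> = 1 \<and> T \<omega> = 0 \<and> Dp 0 \<omega> = d \<longrightarrow> cic_map d (Y d \<omega>) = h (U \<omega>) 1"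
proof -
  let ?c = "\<lambda>g t \<omega>. D \<omega> = d \<and> G \<omega> = g \<and> T \<omega> = t"
  let ?F = "\<lambda>g t. ccdf M Yo (?c g t)"
  have transform: "?F 0 1 (h u 1) = ?F 0 0 (h u 0)" for u
    using ccdf_control_cell_eq[OF a1 _ p01 _ Yh _ ci] ccdf_control_cell_eq[OF a1 _ p00 _ Yh _ ci] mono
    by simp
  have no_level: "AE \<omega> in M. ?c 1 0 \<omega> \<longrightarrow> Yo \<omega> \<in> S \<longrightarrow> ?F 0 0 (Yo \<omega>) \<noteq> l" for l
    using A7 p00 p10 by (intro AE_ne_level_if_strict_mono_on) auto
  have "AE \<omega> in M. ?c 1 0 \<omega> \<longrightarrow> Yo \<omega> \<in> S"
    using AE_in_csupp[of Yo "?c 1 0"] A7 p10 by simp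
  with no_level[of 0] no_level[of 1] AE_space show ?thesis
  proof eventually_elim
    case (elim \<omega>)
    show ?case
    proof
      assume "G \<omega> = 1 \<and> T \<omega> = 0 \<and> Dp 0 \<omega> = d"
      then have "?c 1 0 \<omega>" and Yd: "Y d \<omega> = Yo \<omega>" "Y d \<omega> = h (U \<omega>) 0"
        using Yh elim by (auto simp: D_def Yo_def)
      then have "0 < ?F 0 1 (h (U \<omega>) 1)" "?F 0 1 (h (U \<omega>) 1) < 1" "Yo \<omega> \<in> S"
        using elim transform[of "U \<omega>"] ccdf_nonneg[of Yo "?c 0 0" "Y d \<omega>"]
          ccdf_le_1[of "?c 0 0" Yo "Y d \<omega>"]
        by (auto simp: order_le_less)
      then have "quantile (?F 0 1) (?F 0 1 (h (U \<omega>) 1)) = h (U \<omega>) 1"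
        using A7 p01 S by (intro quantile_ccdf_inverse[where s="Yo \<omega>"]) auto
      then show "cic_map d (Y d \<omega>) = h (U \<omega>) 1"
        unfolding cic_map_def Yd(2) transform[symmetric] .
    qed
  qed
qed

lemma pr_treated_Dp0_pos:
  assumes "pr M (\<lambda>\<omega>. D \<omega> = d \<and> G \<omega> = 1 \<and> T \<omega> = 0) > 0" "t \<le> 1"
  shows "pr M (\<lambda>\<omega>. G \<omega> = 1 \<and> T \<omega> = t \<and> Dp 0 \<omega> = d) > 0"
proof -
  have pr_K: "pr M (\<lambda>\<omega>. G \<omega> = 1 \<and> T \<omega> = r \<and> Dp 0 \<omega> = d) = pr M (\<lambda>\<omega>. Dp 0 \<omega> = d \<and> G \<omega> = 1 \<and> T \<omega> = r)" for r
    by (intro pr_cong) auto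
  have "pr M (\<lambda>\<omega>. G \<omega> = 1 \<and> T \<omega> = 0 \<and> Dp 0 \<omega> = d) = pr M (\<lambda>\<omega>. D \<omega> = d \<and> G \<omega> = 1 \<and> T \<omega> = 0)"
    by (intro pr_cong) (auto simp: D_def)
  with assms(1) have K0: "pr M (\<lambda>\<omega>. G \<omega> = 1 \<and> T \<omega> = 0 \<and> Dp 0 \<omega> = d) > 0" by simp
  moreover have "pr M (\<lambda>\<omega>. G \<omega> = 1 \<and> T \<omega> = 1 \<and> Dp 0 \<omega> = d) / pr M (\<lambda>\<omega>. G \<omega> = 1 \<and> T \<omega> = 1)
      = pr M (\<lambda>\<omega>. G \<omega> = 1 \<and> T \<omega> = 0 \<and> Dp 0 \<omega> = d) / pr M (\<lambda>\<omega>. G \<omega> = 1 \<and> T \<omega> = 0)"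
    using cprob_Dp_T_indep[of 1 "\<lambda>n. n = d" 0] unfolding cprob_def pr_K by simp
  moreover have "pr M (\<lambda>\<omega>. G \<omega> = 1 \<and> T \<omega> = 1) > 0" "pr M (\<lambda>\<omega>. G \<omega> = 1 \<and> T \<omega> = 0) > 0"
    using pr_cell_pos by auto
  ultimately show ?thesis
    using \<open>t \<le> 1\<close> by (cases t) (simp_all add: divide_eq_eq)
qed

lemma cexp_cic_map_treated:
  fixes h :: "real \<Rightarrow> nat \<Rightarrow> real"
  assumes a1: "AE \<omega> in M. G \<omega> = 0 \<longrightarrow> Dp 1 \<omega> = Dp 0 \<omega>"
    and p00: "pr M (\<lambda>\<omega>. D \<omega> = d \<and> G \<omega> = 0 \<and> T \<omega> = 0) > 0"
    and p01: "pr M (\<lambda>\<omega>. D \<omega> = d \<and> G \<omega> = 0 \<and> T \<omega> = 1) > 0"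
    and p10: "pr M (\<lambda>\<omega>. D \<omega> = d \<and> G \<omega> = 1 \<and> T \<omega> = 0) > 0"
    and U [measurable]: "U \<in> borel_measurable M"
    and Yh: "\<forall>\<omega>\<in>space M. Y d \<omega> = h (U \<omega>) (T \<omega>)" and mono: "\<forall>t\<le>1. strict_mono (\<lambda>u. h u t)"
    and ci: "\<forall>g. cindep M U T (\<lambda>\<omega>. G \<omega> = g \<and> Dp 0 \<omega> = d)"
    and S: "is_interval S"
    and A7: "\<forall>g t. pr M (\<lambda>\<omega>. D \<omega> = d \<and> G \<omega> = g \<and> T \<omega> = t) > 0 \<longrightarrow>
            csupp M Yo (\<lambda>\<omega>. D \<omega> = d \<and> G \<omega> = g \<and> T \<omega> = t) = S
            \<and> continuous_on UNIV (ccdf M Yo (\<lambda>\<omega>. D \<omega> = d \<and> G \<omega> = g \<and> T \<omega> = t))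
            \<and> strict_mono_on S (ccdf M Yo (\<lambda>\<omega>. D \<omega> = d \<and> G \<omega> = g \<and> T \<omega> = t))"
    and int: "integrable M (\<lambda>\<omega>. indicator (ev M (\<lambda>\<omega>. G \<omega> = 1 \<and> T \<omega> = 0 \<and> Dp 0 \<omega> = d)) \<omega> * cic_map d (Y d \<omega>))"
  shows "cexp M (\<lambda>\<omega>. cic_map d (Y d \<omega>)) (\<lambda>\<omega>. G \<omega> = 1 \<and> T \<omega> = 0 \<and> Dp 0 \<omega> = d)
       = cexp M (Y d) (\<lambda>\<omega>. G \<omega> = 1 \<and> T \<omega> = 1 \<and> Dp 0 \<omega> = d)"
proof -
  let ?K = "\<lambda>t \<omega>. G \<omega> = 1 \<and> T \<omega> = t \<and> Dp 0 \<omega> = d"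
  let ?I = "\<lambda>t. \<integral>\<omega>. indicator (ev M (?K t)) \<omega> * h (U \<omega>) 1 \<partial>M"
  have h1 [measurable]: "(\<lambda>u. h u 1) \<in> borel_measurable borel"
    using mono by (intro borel_measurable_mono) (simp add: strict_mono_mono)
  have "pr M (?K 0) > 0" "pr M (?K 1) > 0"
    using pr_treated_Dp0_pos[OF p10] by auto
  have cic: "AE \<omega> in M. indicator (ev M (?K 0)) \<omega> * cic_map d (Y d \<omega>) = indicator (ev M (?K 0)) \<omega> * h (U \<omega>) 1"
    using AE_cic_map_eq[OF a1 p00 p01 p10 U Yh mono ci[rule_format, of 0] S A7]
    by eventually_elim (auto simp: ev_def indicator_def)
  have "(\<integral>\<omega>. indicator (ev M (?K 0)) \<omega> * cic_map d (Y d \<omega>) \<partial>M) = ?I 0"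
    by (rule integral_cong_AE[OF borel_measurable_integrable[OF int] _ cic]) measurable
  moreover have "?I 0 * pr M (?K 1) = ?I 1 * pr M (?K 0)"
  proof -
    have swap: "(\<lambda>\<omega>. T \<omega> = t \<and> G \<omega> = 1 \<and> Dp 0 \<omega> = d) = ?K t" for t
      by auto
    have "Measurable.pred M (\<lambda>\<omega>. G \<omega> = 1 \<and> Dp 0 \<omega> = d)" by measurable
    from cindep_integral_cross[OF ci[rule_format, of 1] U this T_measurable h1, of 0 1]
    show ?thesis unfolding swap .
  qed
  moreover have "?I 1 = cexp M (Y d) (?K 1) * pr M (?K 1)"
  proof -
    have "?I 1 = (\<integral>\<omega>. indicator (ev M (?K 1)) \<omega> * Y d \<omega> \<partial>M)"
      using Yh by (intro Bochner_Integration.integral_cong refl) (auto simp: ev_def indicator_def)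
    then show ?thesis by (simp add: integral_indicator_mult_eq_cexp)
  qed
  ultimately show ?thesis
    using \<open>pr M (?K 0) > 0\<close> \<open>pr M (?K 1) > 0\<close> by (simp add: cexp_def field_simps)
qed

lemma indicator_treated_T0_select:
  fixes f :: "nat \<Rightarrow> real \<Rightarrow> real"
  shows "indicator (ev M (\<lambda>\<omega>. G \<omega> = 1 \<and> T \<omega> = 0)) \<omega> * f (D \<omega>) (Yo \<omega>)
    = indicator (ev M (\<lambda>\<omega>. G \<omega> = 1 \<and> T \<omega> = 0)) \<omega> * f (Dp 0 \<omega>) (Y (Dp 0 \<omega>) \<omega>)"
  by (cases "T \<omega> = 0") (auto simp: ev_def indicator_def Yo_def D_def)

lemma integrable_treated_cic_map:
  assumes "integrable M (\<lambda>\<omega>. indicator (ev M (\<lambda>\<omega>. G \<omega> = 1 \<and> T \<omega> = 0)) \<omega> * cic_map (D \<omega>) (Yo \<omega>))"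
  shows "integrable M (\<lambda>\<omega>. indicator (ev M (\<lambda>\<omega>. G \<omega> = 1 \<and> T \<omega> = 0 \<and> Dp 0 \<omega> = d)) \<omega> * cic_map d (Y d \<omega>))"
proof -
  have "indicator (ev M (\<lambda>\<omega>. G \<omega> = 1 \<and> T \<omega> = 0 \<and> Dp 0 \<omega> = d)) \<omega> * cic_map d (Y d \<omega>)
      = indicator (ev M (\<lambda>\<omega>. Dp 0 \<omega> = d)) \<omega>
        * (indicator (ev M (\<lambda>\<omega>. G \<omega> = 1 \<and> T \<omega> = 0)) \<omega> * cic_map (D \<omega>) (Yo \<omega>))" for \<omega>
    unfolding indicator_treated_T0_select by (auto simp: ev_def indicator_def)
  then show ?thesis
    using assms by (simp add: integrable_indicator_ev_mult)
qed

lemma cexp_cic_map_weighted: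
  fixes h :: "nat \<Rightarrow> real \<Rightarrow> nat \<Rightarrow> real" and U :: "nat \<Rightarrow> 'a \<Rightarrow> real"
  assumes a1: "AE \<omega> in M. G \<omega> = 0 \<longrightarrow> Dp 1 \<omega> = Dp 0 \<omega>"
    and pos: "\<forall>d. pr M (\<lambda>\<omega>. D \<omega> = d \<and> G \<omega> = 1 \<and> T \<omega> = 0) > 0 \<longrightarrow>
            pr M (\<lambda>\<omega>. D \<omega> = d \<and> G \<omega> = 0 \<and> T \<omega> = 0) > 0 \<and>
            pr M (\<lambda>\<omega>. D \<omega> = d \<and> G \<omega> = 0 \<and> T \<omega> = 1) > 0"
    and int: "integrable M (\<lambda>\<omega>. indicator (ev M (\<lambda>\<omega>. G \<omega> = 1 \<and> T \<omega> = 0)) \<omega> * cic_map (D \<omega>) (Yo \<omega>))"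
    and A6: "\<forall>d\<le>dbar. U d \<in> borel_measurable M
            \<and> (\<forall>\<omega>\<in>space M. Y d \<omega> = h d (U d \<omega>) (T \<omega>))
            \<and> (\<forall>t\<le>1. strict_mono (\<lambda>u. h d u t))
            \<and> (\<forall>g k. cindep M (U d) T (\<lambda>\<omega>. G \<omega> = g \<and> Dp 0 \<omega> = k))"
    and S: "is_interval S"
    and A7: "\<forall>d g t. pr M (\<lambda>\<omega>. D \<omega> = d \<and> G \<omega> = g \<and> T \<omega> = t) > 0 \<longrightarrow>
            csupp M Yo (\<lambda>\<omega>. D \<omega> = d \<and> G \<omega> = g \<and> T \<omega> = t) = S
            \<and> continuous_on UNIV (ccdf M Yo (\<lambda>\<omega>. D \<omega> = d \<and> G \<omega> = g \<and> T \<omega> = t))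
            \<and> strict_mono_on S (ccdf M Yo (\<lambda>\<omega>. D \<omega> = d \<and> G \<omega> = g \<and> T \<omega> = t))"
    and "d \<le> dbar"
  shows "cexp M (\<lambda>\<omega>. cic_map d (Y d \<omega>)) (\<lambda>\<omega>. G \<omega> = 1 \<and> T \<omega> = 0 \<and> Dp 0 \<omega> = d)
           * cprob M (\<lambda>\<omega>. Dp 0 \<omega> = d) (\<lambda>\<omega>. G \<omega> = 1 \<and> T \<omega> = 0)
       = cexp M (Y d) (\<lambda>\<omega>. G \<omega> = 1 \<and> T \<omega> = 1 \<and> Dp 0 \<omega> = d)
           * cprob M (\<lambda>\<omega>. Dp 0 \<omega> = d) (\<lambda>\<omega>. G \<omega> = 1 \<and> T \<omega> = 1)"
proof (cases "pr M (\<lambda>\<omega>. D \<omega> = d \<and> G \<omega> = 1 \<and> T \<omega> = 0) > 0")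
  case True
  moreover have "pr M (\<lambda>\<omega>. D \<omega> = d \<and> G \<omega> = 0 \<and> T \<omega> = 0) > 0"
    "pr M (\<lambda>\<omega>. D \<omega> = d \<and> G \<omega> = 0 \<and> T \<omega> = 1) > 0"
    using pos True by auto
  moreover have "U d \<in> borel_measurable M" "\<forall>\<omega>\<in>space M. Y d \<omega> = h d (U d \<omega>) (T \<omega>)"
    "\<forall>t\<le>1. strict_mono (\<lambda>u. h d u t)" "\<forall>g. cindep M (U d) T (\<lambda>\<omega>. G \<omega> = g \<and> Dp 0 \<omega> = d)"
    using A6 \<open>d \<le> dbar\<close> by auto
  moreover have "\<forall>g t. pr M (\<lambda>\<omega>. D \<omega> = d \<and> G \<omega> = g \<and> T \<omega> = t) > 0 \<longrightarrow>
        csupp M Yo (\<lambda>\<omega>. D \<omega> = d \<and> G \<omega> = g \<and> T \<omega> = t) = S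
        \<and> continuous_on UNIV (ccdf M Yo (\<lambda>\<omega>. D \<omega> = d \<and> G \<omega> = g \<and> T \<omega> = t))
        \<and> strict_mono_on S (ccdf M Yo (\<lambda>\<omega>. D \<omega> = d \<and> G \<omega> = g \<and> T \<omega> = t))"
    using A7 by blast
  ultimately have "cexp M (\<lambda>\<omega>. cic_map d (Y d \<omega>)) (\<lambda>\<omega>. G \<omega> = 1 \<and> T \<omega> = 0 \<and> Dp 0 \<omega> = d)
      = cexp M (Y d) (\<lambda>\<omega>. G \<omega> = 1 \<and> T \<omega> = 1 \<and> Dp 0 \<omega> = d)"
    by (intro cexp_cic_map_treated[OF a1 _ _ _ _ _ _ _ S _ integrable_treated_cic_map[OF int]]) auto
  then show ?thesis
    unfolding cprob_Dp_T_indep[of 1 "\<lambda>n. n = d" 0, OF order_refl] by simp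
next
  case False
  have "pr M (\<lambda>\<omega>. Dp 0 \<omega> = d \<and> G \<omega> = 1 \<and> T \<omega> = 0) = pr M (\<lambda>\<omega>. D \<omega> = d \<and> G \<omega> = 1 \<and> T \<omega> = 0)"
    by (intro pr_cong) (auto simp: D_def)
  then have "cprob M (\<lambda>\<omega>. Dp 0 \<omega> = d) (\<lambda>\<omega>. G \<omega> = 1 \<and> T \<omega> = 0) = 0"
    using False pr_nonneg[of "\<lambda>\<omega>. D \<omega> = d \<and> G \<omega> = 1 \<and> T \<omega> = 0"] unfolding cprob_def by simp
  then show ?thesis
    unfolding cprob_Dp_T_indep[of 1 "\<lambda>n. n = d" 0, OF order_refl] by simp
qed

lemma CIC_counterfactual:
  fixes h :: "nat \<Rightarrow> real \<Rightarrow> nat \<Rightarrow> real" and U :: "nat \<Rightarrow> 'a \<Rightarrow> real"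
  assumes a1: "AE \<omega> in M. G \<omega> = 0 \<longrightarrow> Dp 1 \<omega> = Dp 0 \<omega>"
    and pos: "\<forall>d. pr M (\<lambda>\<omega>. D \<omega> = d \<and> G \<omega> = 1 \<and> T \<omega> = 0) > 0 \<longrightarrow>
            pr M (\<lambda>\<omega>. D \<omega> = d \<and> G \<omega> = 0 \<and> T \<omega> = 0) > 0 \<and>
            pr M (\<lambda>\<omega>. D \<omega> = d \<and> G \<omega> = 0 \<and> T \<omega> = 1) > 0"
    and int: "integrable M (\<lambda>\<omega>. indicator (ev M (\<lambda>\<omega>. G \<omega> = 1 \<and> T \<omega> = 0)) \<omega> * cic_map (D \<omega>) (Yo \<omega>))"
    and A6: "\<forall>d\<le>dbar. U d \<in> borel_measurable M
            \<and> (\<forall>\<omega>\<in>space M. Y d \<omega> = h d (U d \<omega>) (T \<omega>))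
            \<and> (\<forall>t\<le>1. strict_mono (\<lambda>u. h d u t))
            \<and> (\<forall>g k. cindep M (U d) T (\<lambda>\<omega>. G \<omega> = g \<and> Dp 0 \<omega> = k))"
    and S: "is_interval S"
    and A7: "\<forall>d g t. pr M (\<lambda>\<omega>. D \<omega> = d \<and> G \<omega> = g \<and> T \<omega> = t) > 0 \<longrightarrow>
            csupp M Yo (\<lambda>\<omega>. D \<omega> = d \<and> G \<omega> = g \<and> T \<omega> = t) = S
            \<and> continuous_on UNIV (ccdf M Yo (\<lambda>\<omega>. D \<omega> = d \<and> G \<omega> = g \<and> T \<omega> = t))
            \<and> strict_mono_on S (ccdf M Yo (\<lambda>\<omega>. D \<omega> = d \<and> G \<omega> = g \<and> T \<omega> = t))"
  shows "cexp M (\<lambda>\<omega>. cic_map (D \<omega>) (Yo \<omega>)) (\<lambda>\<omega>. G \<omega> = 1 \<and> T \<omega> = 0) = Ecell Y_D0 1 1"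
proof -
  let ?Z = "\<lambda>d \<omega>. cic_map d (Y d \<omega>)"
  have "cexp M (\<lambda>\<omega>. cic_map (D \<omega>) (Yo \<omega>)) (\<lambda>\<omega>. G \<omega> = 1 \<and> T \<omega> = 0) = Ecell (\<lambda>\<omega>. ?Z (Dp 0 \<omega>) \<omega>) 1 0"
    unfolding Ecell_def cexp_def indicator_treated_T0_select ..
  also have "\<dots> = (\<Sum>d\<le>dbar. cexp M (?Z d) (\<lambda>\<omega>. G \<omega> = 1 \<and> T \<omega> = 0 \<and> Dp 0 \<omega> = d)
      * cprob M (\<lambda>\<omega>. Dp 0 \<omega> = d) (\<lambda>\<omega>. G \<omega> = 1 \<and> T \<omega> = 0))"
    using int unfolding indicator_treated_T0_select by (rule Ecell_select_Dp0[where Z="?Z"])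
  also have "\<dots> = (\<Sum>d\<le>dbar. cexp M (Y d) (\<lambda>\<omega>. G \<omega> = 1 \<and> T \<omega> = 1 \<and> Dp 0 \<omega> = d)
      * cprob M (\<lambda>\<omega>. Dp 0 \<omega> = d) (\<lambda>\<omega>. G \<omega> = 1 \<and> T \<omega> = 1))"
    by (intro sum.cong refl cexp_cic_map_weighted[OF a1 pos int A6 S A7]) simp
  also have "\<dots> = Ecell Y_D0 1 1"
    unfolding Y_D0_def using integrable_Y
    by (intro Ecell_select_Dp0[symmetric] integrable_indicator_select_Dp0) auto
  finally show ?thesis .
qed

theorem CIC_Wald_eq_ACR:
  fixes h :: "nat \<Rightarrow> real \<Rightarrow> nat \<Rightarrow> real" and U :: "nat \<Rightarrow> 'a \<Rightarrow> real"
  assumes D0_same: "\<forall>k. cprob M (\<lambda>\<omega>. D \<omega> = k) (\<lambda>\<omega>. G \<omega> = 0 \<and> T \<omega> = 1)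
                     = cprob M (\<lambda>\<omega>. D \<omega> = k) (\<lambda>\<omega>. G \<omega> = 0 \<and> T \<omega> = 0)"
    and dominance: "\<forall>d. cprob M (\<lambda>\<omega>. d \<le> D \<omega>) (\<lambda>\<omega>. G \<omega> = 1 \<and> T \<omega> = 1)
                     \<ge> cprob M (\<lambda>\<omega>. d \<le> D \<omega>) (\<lambda>\<omega>. G \<omega> = 1 \<and> T \<omega> = 0)"
    and pos: "\<forall>d. pr M (\<lambda>\<omega>. D \<omega> = d \<and> G \<omega> = 1 \<and> T \<omega> = 0) > 0 \<longrightarrow>
            pr M (\<lambda>\<omega>. D \<omega> = d \<and> G \<omega> = 0 \<and> T \<omega> = 0) > 0 \<and>
            pr M (\<lambda>\<omega>. D \<omega> = d \<and> G \<omega> = 0 \<and> T \<omega> = 1) > 0"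
    and int: "integrable M (\<lambda>\<omega>. indicator (ev M (\<lambda>\<omega>. G \<omega> = 1 \<and> T \<omega> = 0)) \<omega> * cic_map (D \<omega>) (Yo \<omega>))"
    and A6: "\<forall>d\<le>dbar. U d \<in> borel_measurable M
            \<and> (\<forall>\<omega>\<in>space M. Y d \<omega> = h d (U d \<omega>) (T \<omega>))
            \<and> (\<forall>t\<le>1. strict_mono (\<lambda>u. h d u t))
            \<and> (\<forall>g k. cindep M (U d) T (\<lambda>\<omega>. G \<omega> = g \<and> Dp 0 \<omega> = k))"
    and S: "is_interval (csupp M Yo (\<lambda>\<omega>. True))"
    and A7: "\<forall>d g t. pr M (\<lambda>\<omega>. D \<omega> = d \<and> G \<omega> = g \<and> T \<omega> = t) > 0 \<longrightarrow>
            csupp M Yo (\<lambda>\<omega>. D \<omega> = d \<and> G \<omega> = g \<and> T \<omega> = t) = csupp M Yo (\<lambda>\<omega>. True)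
            \<and> continuous_on UNIV (ccdf M Yo (\<lambda>\<omega>. D \<omega> = d \<and> G \<omega> = g \<and> T \<omega> = t))
            \<and> strict_mono_on (csupp M Yo (\<lambda>\<omega>. True))
                 (ccdf M Yo (\<lambda>\<omega>. D \<omega> = d \<and> G \<omega> = g \<and> T \<omega> = t))"
  shows "(Ecell Yo 1 1 - cexp M (\<lambda>\<omega>. cic_map (D \<omega>) (Yo \<omega>)) (\<lambda>\<omega>. G \<omega> = 1 \<and> T \<omega> = 0)) / first_stage = ACR"
  using CIC_counterfactual[OF AE_Dp_eq_control[OF D0_same] pos int A6 S A7]
    Ecell_Yo_minus_Y_D0[OF AE_Dp_mono_treated[OF dominance]]
  by (simp add: ACR_eq)

end
theorem theorem5:
  fixes M :: "'a measure"
    and Y :: "nat \<Rightarrow> 'a \<Rightarrow> real"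
    and V :: "'a \<Rightarrow> real"
    and G T :: "'a \<Rightarrow> nat"
    and v :: "nat \<Rightarrow> nat \<Rightarrow> nat \<Rightarrow> real"
    and dbar :: nat
    and h :: "nat \<Rightarrow> real \<Rightarrow> nat \<Rightarrow> real"
    and U :: "nat \<Rightarrow> 'a \<Rightarrow> real"
  defines "Dp \<equiv> \<lambda>t \<omega>. (\<Sum>d\<in>{1..dbar}. if v d (G \<omega>) t \<le> V \<omega> then 1 else 0) :: nat"
  defines "D \<equiv> \<lambda>\<omega>. Dp (T \<omega>) \<omega>"
  defines "Yo \<equiv> \<lambda>\<omega>. Y (D \<omega>) \<omega>"
    and "E \<equiv> \<lambda>X g t. cexp M X (\<lambda>\<omega>. G \<omega> = g \<and> T \<omega> = t)"
    and "ED \<equiv> \<lambda>g t. cexp M (\<lambda>\<omega>. real (D \<omega>)) (\<lambda>\<omega>. G \<omega> = g \<and> T \<omega> = t)"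
  defines "DID \<equiv> \<lambda>X. E X 1 1 - E X 1 0 - (E X 0 1 - E X 0 0)"
  defines "W_DID \<equiv> DID Yo / DID (\<lambda>\<omega>. real (D \<omega>))"
  defines "\<delta> \<equiv> \<lambda>d. cexp M Yo (\<lambda>\<omega>. D \<omega> = d \<and> G \<omega> = 0 \<and> T \<omega> = 1)
                 - cexp M Yo (\<lambda>\<omega>. D \<omega> = d \<and> G \<omega> = 0 \<and> T \<omega> = 0)"
    and "Q \<equiv> \<lambda>d y. quantile (ccdf M Yo (\<lambda>\<omega>. D \<omega> = d \<and> G \<omega> = 0 \<and> T \<omega> = 1))
                   (ccdf M Yo (\<lambda>\<omega>. D \<omega> = d \<and> G \<omega> = 0 \<and> T \<omega> = 0) y)"
    and "w \<equiv> \<lambda>d. (cprob M (\<lambda>\<omega>. d \<le> D \<omega>) (\<lambda>\<omega>. G \<omega> = 1 \<and> T \<omega> = 1)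
                 - cprob M (\<lambda>\<omega>. d \<le> D \<omega>) (\<lambda>\<omega>. G \<omega> = 1 \<and> T \<omega> = 0)) / (ED 1 1 - ED 1 0)"
  defines "W_TC \<equiv> (E Yo 1 1 - cexp M (\<lambda>\<omega>. Yo \<omega> + \<delta> (D \<omega>)) (\<lambda>\<omega>. G \<omega> = 1 \<and> T \<omega> = 0))
                  / (ED 1 1 - ED 1 0)"
  defines "W_CIC \<equiv> (E Yo 1 1 - cexp M (\<lambda>\<omega>. Q (D \<omega>) (Yo \<omega>)) (\<lambda>\<omega>. G \<omega> = 1 \<and> T \<omega> = 0))
                  / (ED 1 1 - ED 1 0)"
    and "ACR \<equiv> \<Sum>d\<in>{1..dbar}. w d * cexp M (\<lambda>\<omega>. Y d \<omega> - Y (d - 1) \<omega>)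
                  (\<lambda>\<omega>. Dp 0 \<omega> < d \<and> d \<le> Dp 1 \<omega> \<and> G \<omega> = 1 \<and> T \<omega> = 1)"
  assumes M: "prob_space M"
    and G_meas: "G \<in> measurable M (count_space UNIV)"
    and T_meas: "T \<in> measurable M (count_space UNIV)"
    and G01: "\<forall>\<omega>\<in>space M. G \<omega> \<le> 1"
    and T01: "\<forall>\<omega>\<in>space M. T \<omega> \<le> 1"
    and V_meas: "V \<in> borel_measurable M"
    and Y_int: "\<forall>d\<le>dbar. integrable M (Y d)"
    and cells_pos: "\<forall>g\<le>1. \<forall>t\<le>1. pr M (\<lambda>\<omega>. G \<omega> = g \<and> T \<omega> = t) > 0"
    and v_mono: "\<forall>g t d. 1 \<le> d \<and> d < dbar \<longrightarrow> v d g t < v (Suc d) g t"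
    and V_T_indep: "\<forall>g. cindep M V T (\<lambda>\<omega>. G \<omega> = g)"
    and first_stage1: "ED 1 1 - ED 1 0 > ED 0 1 - ED 0 0"
    and first_stage2: "ED 1 1 > ED 1 0"
    and D0_same: "\<forall>k. cprob M (\<lambda>\<omega>. D \<omega> = k) (\<lambda>\<omega>. G \<omega> = 0 \<and> T \<omega> = 1)
                     = cprob M (\<lambda>\<omega>. D \<omega> = k) (\<lambda>\<omega>. G \<omega> = 0 \<and> T \<omega> = 0)"
    and dominance: "\<forall>d. cprob M (\<lambda>\<omega>. d \<le> D \<omega>) (\<lambda>\<omega>. G \<omega> = 1 \<and> T \<omega> = 1)
                     \<ge> cprob M (\<lambda>\<omega>. d \<le> D \<omega>) (\<lambda>\<omega>. G \<omega> = 1 \<and> T \<omega> = 0)"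
  shows
    "((E (Y 0) 1 1 - E (Y 0) 1 0 = E (Y 0) 0 1 - E (Y 0) 0 0)
       \<and> (\<forall>d\<le>dbar. \<forall>g\<le>1.
            cexp M (\<lambda>\<omega>. Y d \<omega> - Y 0 \<omega>) (\<lambda>\<omega>. G \<omega> = g \<and> T \<omega> = 1 \<and> Dp 0 \<omega> = d)
          = cexp M (\<lambda>\<omega>. Y d \<omega> - Y 0 \<omega>) (\<lambda>\<omega>. G \<omega> = g \<and> T \<omega> = 0 \<and> Dp 0 \<omega> = d))
       \<longrightarrow> W_DID = ACR)
   \<and> ((\<forall>d. pr M (\<lambda>\<omega>. D \<omega> = d \<and> G \<omega> = 1 \<and> T \<omega> = 0) > 0 \<longrightarrow>
            pr M (\<lambda>\<omega>. D \<omega> = d \<and> G \<omega> = 0 \<and> T \<omega> = 0) > 0 \<and>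
            pr M (\<lambda>\<omega>. D \<omega> = d \<and> G \<omega> = 0 \<and> T \<omega> = 1) > 0)
       \<and> (\<forall>d\<le>dbar.
            cexp M (Y d) (\<lambda>\<omega>. G \<omega> = 1 \<and> T \<omega> = 1 \<and> Dp 0 \<omega> = d)
            - cexp M (Y d) (\<lambda>\<omega>. G \<omega> = 1 \<and> T \<omega> = 0 \<and> Dp 0 \<omega> = d)
          = cexp M (Y d) (\<lambda>\<omega>. G \<omega> = 0 \<and> T \<omega> = 1 \<and> Dp 0 \<omega> = d)
            - cexp M (Y d) (\<lambda>\<omega>. G \<omega> = 0 \<and> T \<omega> = 0 \<and> Dp 0 \<omega> = d))
       \<longrightarrow> W_TC = ACR)
   \<and> ((\<forall>d. pr M (\<lambda>\<omega>. D \<omega> = d \<and> G \<omega> = 1 \<and> T \<omega> = 0) > 0 \<longrightarrow>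
            pr M (\<lambda>\<omega>. D \<omega> = d \<and> G \<omega> = 0 \<and> T \<omega> = 0) > 0 \<and>
            pr M (\<lambda>\<omega>. D \<omega> = d \<and> G \<omega> = 0 \<and> T \<omega> = 1) > 0)
       \<and> integrable M (\<lambda>\<omega>. indicator (ev M (\<lambda>\<omega>. G \<omega> = 1 \<and> T \<omega> = 0)) \<omega> * Q (D \<omega>) (Yo \<omega>))
       \<comment> \<open>Assumption 6\<close>
       \<and> (\<forall>d\<le>dbar. U d \<in> borel_measurable M
            \<and> (\<forall>\<omega>\<in>space M. Y d \<omega> = h d (U d \<omega>) (T \<omega>))
            \<and> (\<forall>t\<le>1. strict_mono (\<lambda>u. h d u t))
            \<and> (\<forall>g k. cindep M (U d) T (\<lambda>\<omega>. G \<omega> = g \<and> Dp 0 \<omega> = k)))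
       \<comment> \<open>Assumption 7\<close>
       \<and> closed (csupp M Yo (\<lambda>\<omega>. True)) \<and> is_interval (csupp M Yo (\<lambda>\<omega>. True))
       \<and> (\<forall>d g t. pr M (\<lambda>\<omega>. D \<omega> = d \<and> G \<omega> = g \<and> T \<omega> = t) > 0 \<longrightarrow>
            csupp M Yo (\<lambda>\<omega>. D \<omega> = d \<and> G \<omega> = g \<and> T \<omega> = t) = csupp M Yo (\<lambda>\<omega>. True)
            \<and> continuous_on UNIV (ccdf M Yo (\<lambda>\<omega>. D \<omega> = d \<and> G \<omega> = g \<and> T \<omega> = t))
            \<and> strict_mono_on (csupp M Yo (\<lambda>\<omega>. True))
                 (ccdf M Yo (\<lambda>\<omega>. D \<omega> = d \<and> G \<omega> = g \<and> T \<omega> = t)))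
       \<longrightarrow> W_CIC = ACR)"
proof -
  interpret L: ordered_treatment M Y V G T v dbar
    using M G_meas T_meas V_meas Y_int cells_pos v_mono V_T_indep
    by (intro ordered_treatment.intro ordered_treatment_axioms.intro) auto
  have Dp_eq: "Dp = L.Dp"
    unfolding Dp_def by (intro ext) (simp add: L.Dp_def L.treatment_def)
  have D_eq: "D = L.D"
    unfolding D_def Dp_eq by (intro ext) (simp add: L.D_def)
  have Yo_eq: "Yo = L.Yo"
    unfolding Yo_def D_eq by (intro ext) (simp add: L.Yo_def)
  note D0 = D0_same[unfolded D_eq] and dom = dominance[unfolded D_eq]
  note defs = L.DID_def L.Ecell_def L.ACR_def L.complier_share_def L.first_stage_def
    L.complier_effect_def L.complier_def L.tc_shift_def L.cic_map_def
  \<comment> \<open>Not every hypothesis is needed. In particular the first-stage inequalities are not: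
    each Wald ratio shares its denominator with the ACR, and division by zero yields zero.\<close>
  show ?thesis
    using L.DID_Wald_eq_ACR[OF D0 dom] L.TC_Wald_eq_ACR[OF D0 dom] L.CIC_Wald_eq_ACR[OF D0 dom]
    unfolding W_DID_def W_TC_def W_CIC_def ACR_def DID_def \<delta>_def Q_def w_def E_def ED_def
      Yo_eq D_eq Dp_eq defs
    by blast
qed

end
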